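(* Let $\Omega$ be a bounded domain in $\mathbb{R}^N$ containing the origin, $1<p<N$, $0<\sigma<p$, $p^\ast(\sigma) = (N-\sigma)p/(N-p)$, let $k\in\mathbb{N}$ with $\lambda_k<\lambda_{k+1}$, and let $\lambda_k\le\lambda<\lambda_{k+1}$. Let $C_0,\rho_0,\eta$ and $C_\rho = \{\pi_{\mathcal{M}}(u_\rho):u\in C_0\}$ be as in the context, and let $c_1>0$ be a constant such that $C_\rho\subset\Psi^{\lambda_k+c_1\rho^{N-p}}$ for all $\rho\in(0,\rho_0/2]$. Let $E_0(u) = \int_\Omega(\frac1p|\nabla u|^p - \frac\lambda p|u|^p - \frac1{p^\ast(\sigma)}|u|^{p^\ast(\sigma)}|x|^{-\sigma})dx$. Then there is a constant $c_{13}>0$ such that for every $\rho\in(0,\rho_0/2]$: \[ \sup_{v\in C_\rho,\ t\ge0}E_0(tv)\le\begin{cases}0 & \text{if }\lambda_k + c_1\rho^{N-p}\le\lambda<\lambda_{k+1},\\ c_{13}\,\rho^{(N-\sigma)(N-p)/(p-\sigma)} & \text{if }\lambda=\lambda_k.\end{cases} \]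
   Context: Work in $W^{1,p}_0(\Omega)$ with norm $\|u\| = \|\nabla u\|_{L^p}$. $\mathcal{M} = \{u:\|u\|^p=p\}$, $\Psi(u) = p/\|u\|_{L^p}^p$ on $\mathcal{M}$, $\Psi^a = \{u\in\mathcal{M}:\Psi(u)\le a\}$, $\pi_{\mathcal{M}}(u) = p^{1/p}u/\|u\|$. $i(\cdot)$ is the Fadell–Rabinowitz $\mathbb{Z}_2$-cohomological index, and $\lambda_k = \inf\{\sup_M\Psi: M\subset\mathcal{M}\text{ symmetric}, i(M)\ge k\}$. $C_0$ is a compact symmetric subset of $\Psi^{\lambda_k}$ with $i(C_0)=k$, bounded in $L^\infty(\Omega)$ and in $C^1(K)$ for each compact $K\subset\Omega$. $\rho_0 = \operatorname{dist}(0,\partial\Omega)$; $\eta:[0,\infty)\to[0,1]$ smooth, $\eta=0$ on $[0,3/4]$, $\eta=1$ on $[1,\infty)$; $u_\rho(x) = \eta(|x|/\rho)u(x)$. *)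

theory Defs
  imports "HOL-Analysis.Analysis"
begin

fun Ck_on :: "'a::euclidean_space set \<Rightarrow> nat \<Rightarrow> ('a \<Rightarrow> real) \<Rightarrow> bool" where
  "Ck_on S 0 f = continuous_on S f"
| "Ck_on S (Suc n) f =
     ((\<forall>x\<in>S. f differentiable (at x)) \<and> continuous_on S f \<and>
      (\<forall>i\<in>Basis. Ck_on S n (\<lambda>x. frechet_derivative f (at x) i)))"

definition smooth_fun_on :: "'a::euclidean_space set \<Rightarrow> ('a \<Rightarrow> real) \<Rightarrow> bool" where
  "smooth_fun_on S f \<longleftrightarrow> (\<forall>n. Ck_on S n f)"

definition grad :: "('a::euclidean_space \<Rightarrow> real) \<Rightarrow> 'a \<Rightarrow> 'a" where
  "grad f x = (\<Sum>i\<in>Basis. frechet_derivative f (at x) i *\<^sub>R i)"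

definition test_fun :: "'a::euclidean_space set \<Rightarrow> ('a \<Rightarrow> real) \<Rightarrow> bool" where
  "test_fun \<Omega> \<phi> \<longleftrightarrow> smooth_fun_on UNIV \<phi> \<and>
     compact (closure {x. \<phi> x \<noteq> 0}) \<and> closure {x. \<phi> x \<noteq> 0} \<subseteq> \<Omega>"

text \<open>u (extended by zero outside \<Omega>) lies in W^{1,p}_0(\<Omega>), the closure of
  C_c^\<infinity>(\<Omega>) in the W^{1,p} norm, with (weak) gradient g.\<close>
definition W0_grad :: "'a::euclidean_space set \<Rightarrow> real \<Rightarrow> ('a \<Rightarrow> real) \<Rightarrow> ('a \<Rightarrow> 'a) \<Rightarrow> bool" where
  "W0_grad \<Omega> p u g \<longleftrightarrow>
     u \<in> borel_measurable lborel \<and> g \<in> borel_measurable lborel \<and>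
     (\<forall>x. x \<notin> \<Omega> \<longrightarrow> u x = 0) \<and>
     (\<exists>\<phi>. (\<forall>n. test_fun \<Omega> (\<phi> n)) \<and>
        (\<lambda>n. \<integral>\<^sup>+x. ennreal (\<bar>\<phi> n x - u x\<bar> powr p) \<partial>lborel) \<longlonglongrightarrow> 0 \<and>
        (\<lambda>n. \<integral>\<^sup>+x. ennreal (norm (grad (\<phi> n) x - g x) powr p) \<partial>lborel) \<longlonglongrightarrow> 0)"

definition W0 :: "'a::euclidean_space set \<Rightarrow> real \<Rightarrow> ('a \<Rightarrow> real) set" where
  "W0 \<Omega> p = {u. \<exists>g. W0_grad \<Omega> p u g}"

definition gradW :: "'a::euclidean_space set \<Rightarrow> real \<Rightarrow> ('a \<Rightarrow> real) \<Rightarrow> 'a \<Rightarrow> 'a" where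
  "gradW \<Omega> p u = (SOME g. W0_grad \<Omega> p u g)"

definition normW :: "'a::euclidean_space set \<Rightarrow> real \<Rightarrow> ('a \<Rightarrow> real) \<Rightarrow> real" where
  "normW \<Omega> p u = (\<integral>x. norm (gradW \<Omega> p u x) powr p \<partial>lborel) powr (1 / p)"

definition Lp_pow :: "real \<Rightarrow> ('a::euclidean_space \<Rightarrow> real) \<Rightarrow> real" where
  "Lp_pow p u = (\<integral>x. \<bar>u x\<bar> powr p \<partial>lborel)"

definition distW :: "'a::euclidean_space set \<Rightarrow> real \<Rightarrow> ('a \<Rightarrow> real) \<Rightarrow> ('a \<Rightarrow> real) \<Rightarrow> real" where
  "distW \<Omega> p u v = normW \<Omega> p (\<lambda>x. u x - v x)"

definition Mfd :: "'a::euclidean_space set \<Rightarrow> real \<Rightarrow> ('a \<Rightarrow> real) set" where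
  "Mfd \<Omega> p = {u \<in> W0 \<Omega> p. normW \<Omega> p u powr p = p}"

definition Psi :: "real \<Rightarrow> ('a::euclidean_space \<Rightarrow> real) \<Rightarrow> real" where
  "Psi p u = p / Lp_pow p u"

definition sublevel :: "'a::euclidean_space set \<Rightarrow> real \<Rightarrow> real \<Rightarrow> ('a \<Rightarrow> real) set" where
  "sublevel \<Omega> p a = {u \<in> Mfd \<Omega> p. Psi p u \<le> a}"

definition piM :: "'a::euclidean_space set \<Rightarrow> real \<Rightarrow> ('a \<Rightarrow> real) \<Rightarrow> ('a \<Rightarrow> real)" where
  "piM \<Omega> p u = (\<lambda>x. (p powr (1 / p) / normW \<Omega> p u) * u x)"

definition symmetric_set :: "('b \<Rightarrow> real) set \<Rightarrow> bool" where
  "symmetric_set A \<longleftrightarrow> (\<forall>u\<in>A. - u \<in> A)"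

text \<open>For a symmetric set A (not containing 0) of a (pseudo)metric space with
  distance d and free involution u \<mapsto> -u, the orbit space A/Z_2 is identified
  with a set R of representatives (one of each pair {u,-u}) with the quotient
  metric min(d u v, d u (-v)).  Alexander--Spanier q-cochains with Z_2 coefficients
  are functions of (q+1)-tuples (entries 0..q) to bool; a cochain is locally zero
  if it vanishes on all tuples contained in a member of some open cover (here:
  balls).  The class w \<in> H^1(A/Z_2;Z_2) of the double cover A \<rightarrow> A/Z_2 is
  represented by the cocycle \<phi>(u,v) = [d u v > d u (-v)] on representatives.
  The index is i(A) = sup{m \<ge> 1 : w^(m-1) \<noteq> 0}, with i(\<emptyset>) = 0.\<close>

definition orbit_reps :: "('b \<Rightarrow> real) set \<Rightarrow> ('b \<Rightarrow> real) set" where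
  "orbit_reps A = (SOME R. R \<subseteq> A \<and> (\<forall>u\<in>A. (u \<in> R) \<longleftrightarrow> (- u \<notin> R)))"

definition qdist :: "(('b \<Rightarrow> real) \<Rightarrow> ('b \<Rightarrow> real) \<Rightarrow> real) \<Rightarrow> ('b \<Rightarrow> real) \<Rightarrow> ('b \<Rightarrow> real) \<Rightarrow> real" where
  "qdist d u v = min (d u v) (d u (- v))"

definition locally_zero ::
  "(('b \<Rightarrow> real) \<Rightarrow> ('b \<Rightarrow> real) \<Rightarrow> real) \<Rightarrow> ('b \<Rightarrow> real) set \<Rightarrow> nat \<Rightarrow> ((nat \<Rightarrow> ('b \<Rightarrow> real)) \<Rightarrow> bool) \<Rightarrow> bool" where
  "locally_zero d R q c \<longleftrightarrow>
     (\<exists>r. (\<forall>x\<in>R. r x > 0) \<and>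
        (\<forall>t x. x \<in> R \<and> (\<forall>i\<le>q. t i \<in> R \<and> qdist d (t i) x < r x) \<longrightarrow> \<not> c t))"

definition trunc_tuple :: "nat \<Rightarrow> (nat \<Rightarrow> 'c) \<Rightarrow> nat \<Rightarrow> 'c" where
  "trunc_tuple q t = (\<lambda>i. if i \<le> q then t i else undefined)"

definition del_tuple :: "nat \<Rightarrow> (nat \<Rightarrow> 'c) \<Rightarrow> nat \<Rightarrow> 'c" where
  "del_tuple j t = (\<lambda>i. if i < j then t i else t (Suc i))"

text \<open>Coboundary of a (q-1)-cochain \<psi>, evaluated on q-simplices (q \<ge> 1), mod 2.\<close>
definition cobdry :: "nat \<Rightarrow> ((nat \<Rightarrow> 'c) \<Rightarrow> bool) \<Rightarrow> (nat \<Rightarrow> 'c) \<Rightarrow> bool" where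
  "cobdry q \<psi> t = odd (card {j. j \<le> q \<and> \<psi> (trunc_tuple (q - 1) (del_tuple j t))})"

text \<open>The cocycle \<phi> and its cup powers \<phi>^m (degree m; \<phi>^0 = 1).\<close>
definition w_cocycle :: "(('b \<Rightarrow> real) \<Rightarrow> ('b \<Rightarrow> real) \<Rightarrow> real) \<Rightarrow> ('b \<Rightarrow> real) \<Rightarrow> ('b \<Rightarrow> real) \<Rightarrow> bool" where
  "w_cocycle d u v \<longleftrightarrow> d u v > d u (- v)"

definition w_pow :: "(('b \<Rightarrow> real) \<Rightarrow> ('b \<Rightarrow> real) \<Rightarrow> real) \<Rightarrow> nat \<Rightarrow> (nat \<Rightarrow> ('b \<Rightarrow> real)) \<Rightarrow> bool" where
  "w_pow d m t \<longleftrightarrow> (\<forall>j<m. w_cocycle d (t j) (t (Suc j)))"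

definition w_pow_nonzero :: "(('b \<Rightarrow> real) \<Rightarrow> ('b \<Rightarrow> real) \<Rightarrow> real) \<Rightarrow> ('b \<Rightarrow> real) set \<Rightarrow> nat \<Rightarrow> bool" where
  "w_pow_nonzero d A m \<longleftrightarrow>
     (if m = 0 then \<not> locally_zero d (orbit_reps A) 0 (w_pow d 0)
      else \<not> (\<exists>\<psi>. locally_zero d (orbit_reps A) m (\<lambda>t. w_pow d m t \<noteq> cobdry m \<psi> t)))"

definition fr_index :: "(('b \<Rightarrow> real) \<Rightarrow> ('b \<Rightarrow> real) \<Rightarrow> real) \<Rightarrow> ('b \<Rightarrow> real) set \<Rightarrow> enat" where
  "fr_index d A = Sup {enat (Suc m) | m. w_pow_nonzero d A m}"

definition lam :: "'a::euclidean_space set \<Rightarrow> real \<Rightarrow> nat \<Rightarrow> ereal" where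
  "lam \<Omega> p k = Inf {(SUP u\<in>M. ereal (Psi p u)) | M.
      M \<subseteq> Mfd \<Omega> p \<and> symmetric_set M \<and> fr_index (distW \<Omega> p) M \<ge> enat k}"

definition E0 :: "'a::euclidean_space set \<Rightarrow> real \<Rightarrow> real \<Rightarrow> real \<Rightarrow> ('a \<Rightarrow> real) \<Rightarrow> real" where
  "E0 \<Omega> p \<sigma> lm u =
     (let ps = (real DIM('a) - \<sigma>) * p / (real DIM('a) - p) in
      (LINT x:\<Omega>|lborel. norm (gradW \<Omega> p u x) powr p / p - lm / p * \<bar>u x\<bar> powr p
                         - \<bar>u x\<bar> powr ps / ps * norm x powr (- \<sigma>)))"

end

theory Submission
  imports Defs
begin

text \<open>Write \<open>q\<close> for the critical exponent \<open>p\<^sup>*(\<sigma>)\<close> and \<open>L = \<parallel>v\<parallel>\<^sub>p\<^sup>p\<close>, so that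
  \<open>\<Psi>(v) = p / L\<close>. Weak gradients in \<open>W\<^sub>0\<^sup>1\<^sup>,\<^sup>p(\<Omega>)\<close> are unique (integrate by parts against
  polynomials and use Stone--Weierstrass), hence \<open>\<nabla>(t v) = t \<nabla>v\<close> and along a ray
  \<open>E\<^sub>0(t v) = t^p (1 - \<lambda> L / p) - t^q / q \<cdot> \<integral>\<^sub>\<Omega> |v|^q |x|^-\<sigma>\<close>.
  As \<open>p / L \<le> \<lambda>\<^sub>k + c\<^sub>1 \<rho>^(N-p)\<close>, the first coefficient is nonpositive when
  \<open>\<lambda> \<ge> \<lambda>\<^sub>k + c\<^sub>1 \<rho>^(N-p)\<close> and at most \<open>c\<^sub>1 \<rho>^(N-p) L / p\<close> when \<open>\<lambda> = \<lambda>\<^sub>k\<close>.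
  On \<open>\<Omega> \<subseteq> B\<^sub>R\<close> the pointwise splitting \<open>|v|^p \<le> \<epsilon>^p + \<epsilon>^(p-q) R^\<sigma> |v|^q |x|^-\<sigma>\<close>
  bounds the weighted integral below by a constant times \<open>L^(q/p)\<close>, and maximising
  \<open>a s^p - b s^q\<close> over \<open>s \<ge> 0\<close> produces the power
  \<open>\<rho>^((N-p) q / (q-p)) = \<rho>^((N-\<sigma>)(N-p)/(p-\<sigma>))\<close>.\<close>

section \<open>Continuously differentiable functions and integration by parts\<close>

definition continuously_differentiable :: "('a::euclidean_space \<Rightarrow> real) \<Rightarrow> bool" where
  "continuously_differentiable f \<longleftrightarrow> (\<forall>x. f differentiable (at x)) \<and>
     (\<forall>v. continuous_on UNIV (\<lambda>x. frechet_derivative f (at x) v))"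

lemma continuously_differentiable_imp_continuous:
  "continuously_differentiable f \<Longrightarrow> continuous_on UNIV f"
  unfolding continuously_differentiable_def
  by (auto intro!: continuous_at_imp_continuous_on differentiable_imp_continuous_within)

lemma continuously_differentiable_real_polynomial_function:
  "real_polynomial_function f \<Longrightarrow> continuously_differentiable f"
proof (induction f rule: real_polynomial_function.induct)
  case (linear f)
  then have d: "\<And>x. (f has_derivative f) (at x)" by (rule bounded_linear_imp_has_derivative)
  then have "\<And>x. frechet_derivative f (at x) = f" using frechet_derivative_at by metis
  then show ?case using d by (auto simp: continuously_differentiable_def differentiable_def)
next
  case (const c)
  have d: "\<And>x. ((\<lambda>x. c) has_derivative (\<lambda>h. 0)) (at x)" by (rule has_derivative_const)
  then have "\<And>x. frechet_derivative (\<lambda>x. c) (at x) = (\<lambda>h. 0)" using frechet_derivative_at by metis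
  then show ?case using d by (auto simp: continuously_differentiable_def differentiable_def)
next
  case (add f g)
  have d: "((\<lambda>x. f x + g x) has_derivative
      (\<lambda>h. frechet_derivative f (at x) h + frechet_derivative g (at x) h)) (at x)" for x
    using add unfolding continuously_differentiable_def
    by (auto intro!: has_derivative_add simp: frechet_derivative_works)
  show ?case unfolding continuously_differentiable_def frechet_derivative_at[OF d, symmetric]
    using add d by (auto simp: continuously_differentiable_def differentiable_def intro!: continuous_on_add)
next
  case (mult f g)
  have d: "((\<lambda>x. f x * g x) has_derivative
      (\<lambda>h. f x * frechet_derivative g (at x) h + frechet_derivative f (at x) h * g x)) (at x)" for x
    using mult unfolding continuously_differentiable_def
    by (auto intro!: has_derivative_mult simp: frechet_derivative_works)
  have "continuous_on UNIV f" "continuous_on UNIV g"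
    using mult continuously_differentiable_imp_continuous by auto
  then show ?case unfolding continuously_differentiable_def frechet_derivative_at[OF d, symmetric]
    using mult d by (auto simp: continuously_differentiable_def differentiable_def
        intro!: continuous_on_add continuous_on_mult)
qed

lemma continuously_differentiable_polynomial_function:
  "polynomial_function (f :: 'a::euclidean_space \<Rightarrow> real) \<Longrightarrow> continuously_differentiable f"
  by (simp add: continuously_differentiable_real_polynomial_function real_polynomial_function_eq)

lemma continuous_bounded_on_cball:
  fixes f :: "'a::euclidean_space \<Rightarrow> real"
  assumes "continuous_on UNIV f"
  obtains B where "B > 0" "\<And>x. x \<in> cball 0 R \<Longrightarrow> \<bar>f x\<bar> \<le> B"
proof -
  have "compact (f ` cball 0 R)"
    by (rule compact_continuous_image) (auto intro: continuous_on_subset[OF assms])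
  then show ?thesis
    using that compact_imp_bounded bounded_pos by (metis image_eqI real_norm_def)
qed

lemma continuous_vanishing_outside_cball:
  fixes f :: "'a::euclidean_space \<Rightarrow> real"
  assumes "continuous_on UNIV f" "\<And>x. R < norm x \<Longrightarrow> f x = 0"
  shows "integrable lborel f" and "\<exists>B>0. \<forall>x. \<bar>f x\<bar> \<le> B"
proof -
  have "integrable lborel (\<lambda>x. indicat_real (cball 0 R) x *\<^sub>R f x)"
    by (rule borel_integrable_compact) (auto intro: continuous_on_subset[OF assms(1)])
  moreover have "(\<lambda>x. indicat_real (cball 0 R) x *\<^sub>R f x) = f"
    using assms(2) by (auto simp: indicator_def fun_eq_iff)
  ultimately show "integrable lborel f" by simp
  obtain B where "B > 0" "\<And>x. x \<in> cball 0 R \<Longrightarrow> \<bar>f x\<bar> \<le> B"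
    using continuous_bounded_on_cball[OF assms(1), of R] by blast
  then show "\<exists>B>0. \<forall>x. \<bar>f x\<bar> \<le> B"
    using assms(2) by (metis abs_zero less_le_not_le linorder_le_less_linear mem_cball_0)
qed

lemma lborel_integral_translate:
  fixes F :: "'a::euclidean_space \<Rightarrow> real"
  assumes "F \<in> borel_measurable borel"
  shows "(\<integral>x. F (x + c) \<partial>lborel) = (\<integral>x. F x \<partial>lborel)"
proof -
  have "(\<integral>x. F x \<partial>lborel) = (\<integral>x. F x \<partial>distr lborel borel ((+) c))"
    by (simp add: lborel_distr_plus)
  also have "\<dots> = (\<integral>x. F (c + x) \<partial>lborel)"
    by (rule integral_distr) (use assms in auto)
  finally show ?thesis by (simp add: add.commute)
qed

lemma has_real_derivative_along_line:
  fixes F :: "'a::euclidean_space \<Rightarrow> real"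
  assumes "F differentiable (at (x + s *\<^sub>R v))"
  shows "((\<lambda>s. F (x + s *\<^sub>R v)) has_real_derivative frechet_derivative F (at (x + s *\<^sub>R v)) v) (at s)"
proof -
  let ?y = "x + s *\<^sub>R v"
  have "((\<lambda>s. x + s *\<^sub>R v) has_derivative (\<lambda>h. h *\<^sub>R v)) (at s)"
    by (auto intro!: derivative_eq_intros)
  from has_derivative_compose[OF this assms[unfolded frechet_derivative_works]]
  have "((\<lambda>s. F (x + s *\<^sub>R v)) has_derivative (\<lambda>h. frechet_derivative F (at ?y) (h *\<^sub>R v))) (at s)"
    by (simp add: o_def)
  moreover have "linear (frechet_derivative F (at ?y))"
    using assms frechet_derivative_works has_derivative_linear by blast
  ultimately show ?thesis
    by (simp add: has_field_derivative_def linear_scale mult_commute_abs)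
qed

lemma difference_quotient_bound:
  fixes F :: "'a::euclidean_space \<Rightarrow> real"
  assumes dF: "\<And>x. F differentiable (at x)"
    and B: "\<And>x. \<bar>frechet_derivative F (at x) v\<bar> \<le> B"
    and van: "\<And>x. R < norm x \<Longrightarrow> F x = 0"
    and s: "0 < s" "s \<le> 1"
  shows "\<bar>(F (x + s *\<^sub>R v) - F x) / s\<bar> \<le> B * indicator (cball 0 (R + norm v)) x"
proof (cases "R + norm v < norm x")
  case True
  then have "R < norm (x + s *\<^sub>R v)"
    using norm_triangle_ineq2[of x "- s *\<^sub>R v"] s mult_left_le_one_le[of "norm v" s] by auto
  moreover have "R < norm x" using True norm_ge_zero[of v] by linarith
  ultimately show ?thesis using True van by simp
next
  case False
  have "\<exists>z. 0 < z \<and> z < s \<and>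
      F (x + s *\<^sub>R v) - F (x + 0 *\<^sub>R v) = (s - 0) * frechet_derivative F (at (x + z *\<^sub>R v)) v"
    by (rule MVT2[where f="\<lambda>s. F (x + s *\<^sub>R v)"]) (use s in \<open>auto intro!: has_real_derivative_along_line dF\<close>)
  then obtain z where "F (x + s *\<^sub>R v) - F x = s * frechet_derivative F (at (x + z *\<^sub>R v)) v" by auto
  then show ?thesis using B[of "x + z *\<^sub>R v"] False s by simp
qed

lemma integral_directional_derivative_eq_0:
  fixes F :: "'a::euclidean_space \<Rightarrow> real"
  assumes dF: "\<And>x. F differentiable (at x)"
    and cD: "continuous_on UNIV (\<lambda>x. frechet_derivative F (at x) v)"
    and van: "\<And>x. R < norm x \<Longrightarrow> F x = 0 \<and> frechet_derivative F (at x) v = 0"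
  shows "(\<integral>x. frechet_derivative F (at x) v \<partial>lborel) = 0"
proof -
  define D where "D x = frechet_derivative F (at x) v" for x
  have cF: "continuous_on UNIV F"
    using dF by (auto intro!: continuous_at_imp_continuous_on differentiable_imp_continuous_within)
  obtain B where B: "\<And>x. \<bar>D x\<bar> \<le> B"
    using continuous_vanishing_outside_cball(2)[of D R] cD van unfolding D_def by auto
  define s where "s n = inverse (real (Suc n))" for n
  have s: "0 < s n" "s n \<le> 1" for n unfolding s_def by (auto simp: field_simps)
  define q where "q n x = (F (x + s n *\<^sub>R v) - F x) / s n" for n x
  have int_shift: "integrable lborel (\<lambda>x. F (x + c))" for c
  proof (rule continuous_vanishing_outside_cball(1)[where R="R + norm c"])
    show "continuous_on UNIV (\<lambda>x. F (x + c))"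
      by (rule continuous_on_compose2[OF cF]) (auto intro!: continuous_intros)
    fix x :: 'a assume "R + norm c < norm x"
    then have "R < norm (x + c)" using norm_triangle_ineq2[of x "- c"] by auto
    then show "F (x + c) = 0" using van by auto
  qed
  have "(\<integral>x. q n x \<partial>lborel) = 0" for n
    using int_shift[of 0] int_shift[of "s n *\<^sub>R v"] lborel_integral_translate[of F "s n *\<^sub>R v"] cF
    by (simp add: q_def borel_measurable_continuous_onI)
  moreover have "(\<lambda>n. \<integral>x. q n x \<partial>lborel) \<longlonglongrightarrow> (\<integral>x. D x \<partial>lborel)"
  proof (rule integral_dominated_convergence[where w="\<lambda>x. B * indicator (cball 0 (R + norm v)) x"])
    show "D \<in> borel_measurable lborel" using cD unfolding D_def by (simp add: borel_measurable_continuous_onI)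
    show "q n \<in> borel_measurable lborel" for n
      using int_shift[of 0] int_shift[of "s n *\<^sub>R v"] unfolding q_def by auto
    show "integrable lborel (\<lambda>x. B * indicat_real (cball 0 (R + norm v)) x)"
      by (auto intro!: integrable_real_indicator emeasure_compact_finite)
    show "AE x in lborel. (\<lambda>n. q n x) \<longlonglongrightarrow> D x"
    proof (intro AE_I2)
      fix x
      have "((\<lambda>h. (F (x + h *\<^sub>R v) - F x) / h) \<longlongrightarrow> D x) (at 0)"
        using has_real_derivative_along_line[OF dF, where x=x and s=0 and v=v]
        unfolding DERIV_def D_def by simp
      moreover have "filterlim s (at 0) sequentially"
        unfolding s_def by (rule filterlim_atI) (use LIMSEQ_inverse_real_of_nat in auto)
      ultimately show "(\<lambda>n. q n x) \<longlonglongrightarrow> D x" unfolding q_def by (rule filterlim_compose)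
    qed
    show "AE x in lborel. norm (q n x) \<le> B * indicat_real (cball 0 (R + norm v)) x" for n
      unfolding q_def real_norm_def using B van s
      by (intro AE_I2 difference_quotient_bound[OF dF]) (auto simp: D_def)
  qed
  ultimately have "(\<lambda>n. 0) \<longlonglongrightarrow> (\<integral>x. D x \<partial>lborel)" by simp
  then show ?thesis unfolding D_def by (simp add: LIMSEQ_const_iff)
qed

lemma integration_by_parts_compact_support:
  fixes \<phi> P :: "'a::euclidean_space \<Rightarrow> real"
  assumes d\<phi>: "\<And>x. \<phi> differentiable (at x)"
    and c\<phi>': "continuous_on UNIV (\<lambda>x. frechet_derivative \<phi> (at x) v)"
    and P: "continuously_differentiable P"
    and van: "\<And>x. R < norm x \<Longrightarrow> \<phi> x = 0 \<and> frechet_derivative \<phi> (at x) v = 0"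
  shows "integrable lborel (\<lambda>x. frechet_derivative \<phi> (at x) v * P x)"
    and "integrable lborel (\<lambda>x. \<phi> x * frechet_derivative P (at x) v)"
    and "(\<integral>x. frechet_derivative \<phi> (at x) v * P x \<partial>lborel) =
         - (\<integral>x. \<phi> x * frechet_derivative P (at x) v \<partial>lborel)"
proof -
  have c\<phi>: "continuous_on UNIV \<phi>"
    using d\<phi> by (auto intro!: continuous_at_imp_continuous_on differentiable_imp_continuous_within)
  have cP: "continuous_on UNIV P" "continuous_on UNIV (\<lambda>x. frechet_derivative P (at x) v)"
    using P continuously_differentiable_imp_continuous unfolding continuously_differentiable_def by auto
  show I1: "integrable lborel (\<lambda>x. frechet_derivative \<phi> (at x) v * P x)"
    by (rule continuous_vanishing_outside_cball(1)[where R=R])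
      (use van in \<open>auto intro!: continuous_on_mult c\<phi>' cP\<close>)
  show I2: "integrable lborel (\<lambda>x. \<phi> x * frechet_derivative P (at x) v)"
    by (rule continuous_vanishing_outside_cball(1)[where R=R])
      (use van in \<open>auto intro!: continuous_on_mult c\<phi> cP\<close>)
  have d: "((\<lambda>x. \<phi> x * P x) has_derivative
      (\<lambda>h. \<phi> x * frechet_derivative P (at x) h + frechet_derivative \<phi> (at x) h * P x)) (at x)" for x
    using d\<phi> P unfolding continuously_differentiable_def
    by (auto intro!: has_derivative_mult simp: frechet_derivative_works)
  have "(\<integral>x. frechet_derivative (\<lambda>x. \<phi> x * P x) (at x) v \<partial>lborel) = 0"
  proof (rule integral_directional_derivative_eq_0[where R=R])
    show "(\<lambda>x. \<phi> x * P x) differentiable (at x)" for x using d differentiable_def by blast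
    show "continuous_on UNIV (\<lambda>x. frechet_derivative (\<lambda>x. \<phi> x * P x) (at x) v)"
      unfolding frechet_derivative_at[OF d, symmetric]
      by (intro continuous_on_add continuous_on_mult c\<phi> c\<phi>' cP)
    show "R < norm x \<Longrightarrow> \<phi> x * P x = 0 \<and> frechet_derivative (\<lambda>x. \<phi> x * P x) (at x) v = 0" for x
      unfolding frechet_derivative_at[OF d, symmetric] using van by simp
  qed
  then show "(\<integral>x. frechet_derivative \<phi> (at x) v * P x \<partial>lborel) =
         - (\<integral>x. \<phi> x * frechet_derivative P (at x) v \<partial>lborel)"
    unfolding frechet_derivative_at[OF d, symmetric] using I1 I2 by (simp add: add.commute)
qed

section \<open>The fundamental lemma of the calculus of variations\<close>

lemma integrable_mult_continuous:
  fixes H g :: "'a::euclidean_space \<Rightarrow> real"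
  assumes intH: "integrable lborel H" and H: "\<And>x. x \<notin> cball 0 R \<Longrightarrow> H x = 0"
    and g: "continuous_on UNIV g"
  shows "integrable lborel (\<lambda>x. H x * g x)"
proof -
  obtain B where B: "\<And>x. x \<in> cball 0 R \<Longrightarrow> \<bar>g x\<bar> \<le> B" using continuous_bounded_on_cball[OF g] by metis
  have bound: "\<bar>H x * g x\<bar> \<le> \<bar>B\<bar> * \<bar>H x\<bar>" for x
  proof (cases "x \<in> cball 0 R")
    case True
    then have "\<bar>g x\<bar> \<le> \<bar>B\<bar>" using B by force
    then show ?thesis by (metis abs_ge_zero abs_mult mult.commute mult_left_mono)
  qed (simp add: H)
  show ?thesis
  proof (rule Bochner_Integration.integrable_bound[where f="\<lambda>x. \<bar>B\<bar> * \<bar>H x\<bar>"])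
    show "integrable lborel (\<lambda>x. \<bar>B\<bar> * \<bar>H x\<bar>)" using intH by simp
    show "(\<lambda>x. H x * g x) \<in> borel_measurable lborel"
      by (intro borel_measurable_times) (use intH borel_measurable_continuous_onI[OF g] in auto)
    show "AE x in lborel. norm (H x * g x) \<le> norm (\<bar>B\<bar> * \<bar>H x\<bar>)"
      using bound by (intro AE_I2) simp
  qed
qed

lemma integral_mult_continuous_eq_0_if_orthogonal_polynomials:
  fixes H :: "'a::euclidean_space \<Rightarrow> real"
  assumes intH: "integrable lborel H" and H: "\<And>x. x \<notin> cball 0 R \<Longrightarrow> H x = 0"
    and orth: "\<And>P. polynomial_function P \<Longrightarrow> (\<integral>x. H x * P x \<partial>lborel) = 0"
    and f: "continuous_on UNIV f"
  shows "(\<integral>x. H x * f x \<partial>lborel) = 0"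
proof -
  let ?K = "cball (0::'a) R" and ?c = "\<integral>x. \<bar>H x\<bar> \<partial>lborel"
  have int: "integrable lborel (\<lambda>x. H x * g x)" if "continuous_on UNIV g" for g
    by (rule integrable_mult_continuous[where R=R, OF intH _ that]) (rule H)
  have "\<bar>\<integral>x. H x * f x \<partial>lborel\<bar> \<le> 0 + e" if e: "0 < e" for e
  proof -
    have e': "0 < e / (?c + 1)" using e by (simp add: add_nonneg_pos)
    have "continuous_on ?K f" using f by (rule continuous_on_subset) simp
    from Stone_Weierstrass_polynomial_function[OF compact_cball this e']
    obtain P where P: "polynomial_function P" and approx: "\<And>x. x \<in> ?K \<Longrightarrow> \<bar>f x - P x\<bar> < e / (?c + 1)"
      by auto
    have cP: "continuous_on UNIV P"
      by (rule continuously_differentiable_imp_continuous[OF continuously_differentiable_polynomial_function[OF P]])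
    have "(\<integral>x. H x * f x \<partial>lborel) = (\<integral>x. H x * f x \<partial>lborel) - (\<integral>x. H x * P x \<partial>lborel)"
      using orth[OF P] by simp
    also have "\<dots> = (\<integral>x. H x * (f x - P x) \<partial>lborel)"
      using int[OF f] int[OF cP] by (simp add: algebra_simps)
    finally have "\<bar>\<integral>x. H x * f x \<partial>lborel\<bar> \<le> (\<integral>x. \<bar>H x * (f x - P x)\<bar> \<partial>lborel)"
      using integral_abs_bound by metis
    also have "\<dots> \<le> (\<integral>x. e / (?c + 1) * \<bar>H x\<bar> \<partial>lborel)"
    proof (rule integral_mono)
      show "integrable lborel (\<lambda>x. \<bar>H x * (f x - P x)\<bar>)"
        using int[OF f] int[OF cP] by (simp add: right_diff_distrib)
      show "\<bar>H x * (f x - P x)\<bar> \<le> e / (?c + 1) * \<bar>H x\<bar>" for x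
      proof (cases "x \<in> ?K")
        case True
        then have "\<bar>f x - P x\<bar> \<le> e / (?c + 1)" using approx by (simp add: less_imp_le)
        then show ?thesis by (metis abs_ge_zero abs_mult mult.commute mult_left_mono)
      qed (simp add: H)
    qed (use intH in simp)
    also have "\<dots> = e * (?c / (?c + 1))" by simp
    also have "\<dots> \<le> e"
    proof -
      have "0 \<le> ?c" by (rule integral_nonneg_AE) simp
      then have "?c / (?c + 1) \<le> 1" by (subst divide_le_eq_1_pos) linarith+
      then show ?thesis using e by (intro mult_left_le) auto
    qed
    finally show ?thesis by simp
  qed
  then show ?thesis using field_le_epsilon[of "\<bar>\<integral>x. H x * f x \<partial>lborel\<bar>" 0] by simp
qed

lemma integral_indicator_open_eq_0_if_orthogonal_continuous:
  fixes H :: "'a::euclidean_space \<Rightarrow> real"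
  assumes intH: "integrable lborel H"
    and orth: "\<And>f. continuous_on UNIV f \<Longrightarrow> (\<integral>x. H x * f x \<partial>lborel) = 0"
    and U: "open U"
  shows "(\<integral>x. H x * indicator U x \<partial>lborel) = 0"
proof (cases "U = UNIV")
  case True
  then show ?thesis using orth[of "\<lambda>x. 1"] by simp
next
  case False
  define f where "f m x = min 1 (real m * infdist x (- U))" for m :: nat and x :: 'a
  have cf: "continuous_on UNIV (f m)" for m unfolding f_def by (intro continuous_intros)
  have f01: "0 \<le> f m x" "f m x \<le> 1" for m x unfolding f_def by (auto simp: infdist_nonneg)
  have lim: "(\<lambda>m. f m x) \<longlonglongrightarrow> indicator U x" for x
  proof (cases "x \<in> U")
    case True
    have "infdist x (- U) > 0" using True False U by (intro infdist_pos_not_in_closed) auto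
    then obtain m0 :: nat where "1 \<le> real m0 * infdist x (- U)"
      using ex_less_of_nat_mult[of "infdist x (- U)" 1] by (auto intro: less_imp_le)
    then have "f m x = 1" if "m0 \<le> m" for m
    proof -
      have "real m0 * infdist x (- U) \<le> real m * infdist x (- U)"
        using that by (intro mult_right_mono) (auto simp: infdist_nonneg)
      then show ?thesis using \<open>1 \<le> real m0 * infdist x (- U)\<close> unfolding f_def by simp
    qed
    then have "\<forall>\<^sub>F m in sequentially. f m x = 1" by (auto simp: eventually_sequentially)
    then show ?thesis using True by (simp add: tendsto_eventually)
  qed (simp add: f_def)
  have "(\<lambda>m. \<integral>x. H x * f m x \<partial>lborel) \<longlonglongrightarrow> (\<integral>x. H x * indicator U x \<partial>lborel)"
  proof (rule integral_dominated_convergence[where w="\<lambda>x. \<bar>H x\<bar>"])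
    show "(\<lambda>x. H x * indicator U x) \<in> borel_measurable lborel"
      using intH U by (intro borel_measurable_times) (auto intro: borel_open)
    show "(\<lambda>x. H x * f m x) \<in> borel_measurable lborel" for m
      by (intro borel_measurable_times) (use intH borel_measurable_continuous_onI[OF cf[of m]] in auto)
    show "AE x in lborel. (\<lambda>m. H x * f m x) \<longlonglongrightarrow> H x * indicator U x"
      using lim by (intro AE_I2 tendsto_mult tendsto_const) auto
    show "AE x in lborel. norm (H x * f m x) \<le> \<bar>H x\<bar>" for m
      using f01[of m] by (intro AE_I2) (auto simp: abs_mult intro: mult_left_le)
  qed (use intH in auto)
  moreover have "(\<integral>x. H x * f m x \<partial>lborel) = 0" for m by (rule orth[OF cf])
  ultimately have "(\<lambda>m. 0) \<longlonglongrightarrow> (\<integral>x. H x * indicator U x \<partial>lborel)" by simp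
  then show ?thesis by (simp add: LIMSEQ_const_iff)
qed

lemma AE_eq_0_if_integral_indicator_open_eq_0:
  fixes H :: "'a::euclidean_space \<Rightarrow> real"
  assumes intH: "integrable lborel H"
    and opn: "\<And>U. open U \<Longrightarrow> (\<integral>x. H x * indicator U x \<partial>lborel) = 0"
  shows "AE x in lborel. H x = 0"
proof (rule sigma_finite_measure.density_zero[OF sigma_finite_lborel intH])
  fix A :: "'a set" assume "A \<in> sets lborel"
  have "Int_stable {S::'a set. open S}" by (auto simp: Int_stable_def)
  moreover have "{S::'a set. open S} \<subseteq> Pow UNIV" by simp
  moreover have "A \<in> sigma_sets UNIV {S. open S}" using \<open>A \<in> sets lborel\<close> by (simp add: sets_borel)
  ultimately have "(\<integral>x. indicator A x *\<^sub>R H x \<partial>lborel) = 0"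
  proof (induct rule: sigma_sets_induct_disjoint)
    case (basic A)
    then show ?case using opn[of A] by (simp add: mult.commute)
  next
    case (compl A)
    then have "A \<in> sets lborel" by (simp add: sets_borel)
    moreover have "(\<lambda>x. indicator (UNIV - A) x *\<^sub>R H x) = (\<lambda>x. H x - indicator A x *\<^sub>R H x)"
      by (auto simp: fun_eq_iff indicator_def)
    ultimately show ?case using compl(2) opn[of UNIV] intH integrable_mult_indicator[of A lborel H] by simp
  next
    case (union A)
    then have A: "\<And>i. A i \<in> sets lborel" by (auto simp: sets_borel)
    have "set_integrable lborel (\<Union>i. A i) H"
      unfolding set_integrable_def using A intH by (intro integrable_mult_indicator) auto
    then have "(LINT x:(\<Union>i. A i)|lborel. H x) = (\<Sum>i. (LINT x:(A i)|lborel. H x))"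
      using A union(1) by (intro lebesgue_integral_countable_add) (auto simp: disjoint_family_on_def)
    then show ?case using union(3) by (simp add: set_lebesgue_integral_def)
  qed auto
  then show "set_lebesgue_integral lborel A H = 0" by (simp add: set_lebesgue_integral_def)
qed

lemma AE_eq_0_if_orthogonal_polynomials:
  fixes H :: "'a::euclidean_space \<Rightarrow> real"
  assumes H: "integrable lborel H" "\<And>x. x \<notin> cball 0 R \<Longrightarrow> H x = 0"
    and orth: "\<And>P. polynomial_function P \<Longrightarrow> (\<integral>x. H x * P x \<partial>lborel) = 0"
  shows "AE x in lborel. H x = 0"
proof (rule AE_eq_0_if_integral_indicator_open_eq_0[OF H(1)])
  fix U :: "'a set" assume "open U"
  with H show "(\<integral>x. H x * indicator U x \<partial>lborel) = 0"
    using integral_indicator_open_eq_0_if_orthogonal_continuous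
      integral_mult_continuous_eq_0_if_orthogonal_polynomials[OF H orth] by blast
qed

section \<open>Weak gradients\<close>

lemma test_funD:
  assumes "test_fun \<Omega> \<phi>"
  shows "\<And>x. \<phi> differentiable (at x)" and "continuous_on UNIV \<phi>"
    and "\<And>i. i \<in> Basis \<Longrightarrow> continuous_on UNIV (\<lambda>x. frechet_derivative \<phi> (at x) i)"
    and "\<And>x. x \<notin> \<Omega> \<Longrightarrow> \<phi> x = 0"
    and "\<And>x. x \<notin> \<Omega> \<Longrightarrow> frechet_derivative \<phi> (at x) = (\<lambda>h. 0)"
proof -
  have "Ck_on UNIV (Suc 0) \<phi>" and supp: "closure {x. \<phi> x \<noteq> 0} \<subseteq> \<Omega>"
    using assms unfolding test_fun_def smooth_fun_on_def by blast+
  then show "\<And>x. \<phi> differentiable (at x)" "continuous_on UNIV \<phi>"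
    "\<And>i. i \<in> Basis \<Longrightarrow> continuous_on UNIV (\<lambda>x. frechet_derivative \<phi> (at x) i)"
    by auto
  show "\<phi> x = 0" if "x \<notin> \<Omega>" for x
    using that supp closure_subset[of "{x. \<phi> x \<noteq> 0}"] by auto
  show "frechet_derivative \<phi> (at x) = (\<lambda>h. 0)" if "x \<notin> \<Omega>" for x
  proof -
    have "((\<lambda>x. 0) has_derivative (\<lambda>h. 0)) (at x)" by simp
    then have "(\<phi> has_derivative (\<lambda>h. 0)) (at x)"
    proof (rule has_derivative_transform_within_open[where s="- closure {x. \<phi> x \<noteq> 0}"])
      show "x \<in> - closure {x. \<phi> x \<noteq> 0}" using that supp by auto
      show "\<And>y. y \<in> - closure {x. \<phi> x \<noteq> 0} \<Longrightarrow> 0 = \<phi> y"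
        using closure_subset[of "{x. \<phi> x \<noteq> 0}"] by auto
    qed auto
    then show ?thesis using frechet_derivative_at by metis
  qed
qed

lemma grad_inner_Basis: "i \<in> Basis \<Longrightarrow> grad f x \<bullet> i = frechet_derivative f (at x) i"
  unfolding grad_def by (simp add: inner_sum_left inner_Basis if_distrib sum.delta cong: if_cong)

lemma abs_le_powr_split:
  fixes a \<delta> p :: real
  assumes "0 < \<delta>" "1 \<le> p"
  shows "\<bar>a\<bar> \<le> \<delta> + \<delta> powr (1 - p) * \<bar>a\<bar> powr p"
proof (cases "\<bar>a\<bar> \<le> \<delta>")
  case False
  then have "\<bar>a\<bar> powr p * \<bar>a\<bar> powr (1 - p) \<le> \<bar>a\<bar> powr p * \<delta> powr (1 - p)"
    using assms by (intro mult_left_mono powr_mono2') auto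
  moreover have "\<bar>a\<bar> powr p * \<bar>a\<bar> powr (1 - p) = \<bar>a\<bar>"
    using False assms by (simp add: powr_add[symmetric])
  ultimately show ?thesis using assms by (simp add: mult.commute add_increasing)
qed (simp add: add_increasing2)

lemma integral_weighted_diff_le:
  fixes f F w :: "'a::euclidean_space \<Rightarrow> real"
  assumes p: "1 \<le> p"
    and meas: "f \<in> borel_measurable lborel" "F \<in> borel_measurable lborel" "w \<in> borel_measurable lborel"
    and wb: "\<And>x. \<bar>w x\<bar> \<le> W" and wK: "\<And>x. x \<notin> K \<Longrightarrow> w x = 0"
    and K: "K \<in> sets lborel" "emeasure lborel K < \<infinity>"
    and int: "integrable lborel (\<lambda>x. \<bar>f x - F x\<bar> powr p)" and \<delta>: "0 < \<delta>"
  shows "integrable lborel (\<lambda>x. (f x - F x) * w x)"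
    and "\<bar>\<integral>x. (f x - F x) * w x \<partial>lborel\<bar>
      \<le> W * \<delta> * measure lborel K + W * \<delta> powr (1 - p) * (\<integral>x. \<bar>f x - F x\<bar> powr p \<partial>lborel)"
proof -
  have W: "0 \<le> W" using wb[of 0] by auto
  have int_K: "integrable lborel (indicat_real K)" using K by (rule integrable_real_indicator)
  have bound: "\<bar>(f x - F x) * w x\<bar> \<le> W * \<delta> * indicator K x + W * \<delta> powr (1 - p) * \<bar>f x - F x\<bar> powr p" for x
  proof (cases "x \<in> K")
    case True
    have "\<bar>(f x - F x) * w x\<bar> \<le> \<bar>f x - F x\<bar> * W" using wb[of x] by (simp add: abs_mult mult_left_mono)
    also have "\<dots> \<le> (\<delta> + \<delta> powr (1 - p) * \<bar>f x - F x\<bar> powr p) * W"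
      using abs_le_powr_split[OF \<delta> p] W by (intro mult_right_mono) auto
    finally show ?thesis using True by (simp add: algebra_simps)
  qed (use wK W in simp)
  have int_bound: "integrable lborel (\<lambda>x. W * \<delta> * indicator K x + W * \<delta> powr (1 - p) * \<bar>f x - F x\<bar> powr p)"
    using int_K int by simp
  show int_diff: "integrable lborel (\<lambda>x. (f x - F x) * w x)"
    by (rule Bochner_Integration.integrable_bound[OF int_bound])
      (use meas bound in \<open>auto intro!: AE_I2 intro: order_trans[OF _ abs_ge_self]\<close>)
  have "\<bar>\<integral>x. (f x - F x) * w x \<partial>lborel\<bar> \<le> (\<integral>x. \<bar>(f x - F x) * w x\<bar> \<partial>lborel)"
    by (rule integral_abs_bound)
  also have "\<dots> \<le> (\<integral>x. W * \<delta> * indicator K x + W * \<delta> powr (1 - p) * \<bar>f x - F x\<bar> powr p \<partial>lborel)"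
    by (rule integral_mono) (use int_diff int_bound bound in auto)
  also have "\<dots> = W * \<delta> * measure lborel K + W * \<delta> powr (1 - p) * (\<integral>x. \<bar>f x - F x\<bar> powr p \<partial>lborel)"
    using int_K int K by simp
  finally show "\<bar>\<integral>x. (f x - F x) * w x \<partial>lborel\<bar>
      \<le> W * \<delta> * measure lborel K + W * \<delta> powr (1 - p) * (\<integral>x. \<bar>f x - F x\<bar> powr p \<partial>lborel)" .
qed

lemma Lp_tendsto_weighted_integral:
  fixes f :: "nat \<Rightarrow> 'a::euclidean_space \<Rightarrow> real" and F w :: "'a \<Rightarrow> real"
  assumes p: "1 \<le> p"
    and mf: "\<And>n. f n \<in> borel_measurable lborel" and mF: "F \<in> borel_measurable lborel"
    and mw: "w \<in> borel_measurable lborel"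
    and lim: "(\<lambda>n. \<integral>\<^sup>+x. ennreal (\<bar>f n x - F x\<bar> powr p) \<partial>lborel) \<longlonglongrightarrow> 0"
    and wb: "\<And>x. \<bar>w x\<bar> \<le> W" and wK: "\<And>x. x \<notin> K \<Longrightarrow> w x = 0"
    and K: "K \<in> sets lborel" "emeasure lborel K < \<infinity>"
    and intf: "\<And>n. integrable lborel (\<lambda>x. f n x * w x)"
  shows "integrable lborel (\<lambda>x. F x * w x)"
    and "(\<lambda>n. \<integral>x. f n x * w x \<partial>lborel) \<longlonglongrightarrow> (\<integral>x. F x * w x \<partial>lborel)"
proof -
  define I where "I n = (\<integral>\<^sup>+x. ennreal (\<bar>f n x - F x\<bar> powr p) \<partial>lborel)" for n
  define J where "J n = enn2real (I n)" for n
  define m where "m = measure lborel K"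
  have W: "0 \<le> W" using wb[of 0] by auto
  have J0: "0 \<le> J n" for n unfolding J_def by simp
  obtain N0 where N0: "\<And>n. n \<ge> N0 \<Longrightarrow> I n < 1"
    using order_tendstoD(2)[OF lim[folded I_def], of 1] by (auto simp: eventually_sequentially)
  have mD: "(\<lambda>x. \<bar>f n x - F x\<bar> powr p) \<in> borel_measurable lborel" for n
    using mf mF by measurable
  have intD: "integrable lborel (\<lambda>x. \<bar>f n x - F x\<bar> powr p)" if "n \<ge> N0" for n
  proof (rule integrableI_bounded[OF mD])
    have "I n < \<infinity>" using N0[OF that] ennreal_less_top order.strict_trans by fastforce
    then show "(\<integral>\<^sup>+x. ennreal (norm (\<bar>f n x - F x\<bar> powr p)) \<partial>lborel) < \<infinity>" unfolding I_def by simp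
  qed
  have intJ: "(\<integral>x. \<bar>f n x - F x\<bar> powr p \<partial>lborel) = J n" for n
    unfolding J_def I_def by (rule integral_eq_nn_integral[OF mD]) auto
  note diff = integral_weighted_diff_le[where p=p and W=W and K=K and f="f n" and F=F and w=w for n]
  have "integrable lborel (\<lambda>x. (f N0 x - F x) * w x)"
    by (rule diff(1)[where \<delta>=1]) (use p mf mF mw wb wK K intD[of N0] in auto)
  then have "integrable lborel (\<lambda>x. f N0 x * w x - (f N0 x - F x) * w x)"
    using intf by auto
  then show intFw: "integrable lborel (\<lambda>x. F x * w x)" by (simp add: algebra_simps)
  have estimate: "\<bar>(\<integral>x. f n x * w x \<partial>lborel) - (\<integral>x. F x * w x \<partial>lborel)\<bar> \<le> W * \<delta> * m + W * \<delta> powr (1 - p) * J n"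
    if "n \<ge> N0" "\<delta> > 0" for n \<delta>
  proof -
    have "(\<integral>x. f n x * w x \<partial>lborel) - (\<integral>x. F x * w x \<partial>lborel) = (\<integral>x. (f n x - F x) * w x \<partial>lborel)"
      using intf intFw by (simp add: algebra_simps)
    moreover have "\<bar>\<integral>x. (f n x - F x) * w x \<partial>lborel\<bar> \<le> W * \<delta> * m + W * \<delta> powr (1 - p) * J n"
      unfolding m_def intJ[symmetric] by (rule diff(2)) (use p mf mF mw wb wK K intD that in auto)
    ultimately show ?thesis by simp
  qed
  \<comment> \<open>With this choice of \<open>\<delta>\<close> the estimate becomes \<open>W (m + 1) \<delta> n\<close>; no
    H\<ouml>lder inequality is needed.\<close>
  define \<delta> where "\<delta> n = J n powr (1 / p) + inverse (real (Suc n))" for n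
  have \<delta>: "0 < \<delta> n" for n unfolding \<delta>_def by (simp add: add_nonneg_pos)
  have J_le: "J n \<le> \<delta> n powr p" for n
  proof -
    have "J n = (J n powr (1 / p)) powr p" using J0[of n] p by (simp add: powr_powr)
    also have "\<dots> \<le> \<delta> n powr p" unfolding \<delta>_def using p by (intro powr_mono2) auto
    finally show ?thesis .
  qed
  have W\<delta>: "W * \<delta> n powr (1 - p) * J n \<le> W * \<delta> n" for n
  proof -
    have "W * \<delta> n powr (1 - p) * J n \<le> W * \<delta> n powr (1 - p) * \<delta> n powr p"
      using J_le[of n] W by (intro mult_left_mono) auto
    also have "\<dots> = W * \<delta> n" using \<delta>[of n] by (simp add: powr_add[symmetric] mult.assoc)
    finally show ?thesis .
  qed
  have "\<forall>\<^sub>F n in sequentially.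
      norm ((\<integral>x. f n x * w x \<partial>lborel) - (\<integral>x. F x * w x \<partial>lborel)) \<le> W * (m + 1) * \<delta> n"
    unfolding eventually_sequentially real_norm_def
  proof (intro exI allI impI)
    fix n assume "N0 \<le> n"
    from estimate[OF this \<delta>[of n]] W\<delta>[of n]
    show "\<bar>(\<integral>x. f n x * w x \<partial>lborel) - (\<integral>x. F x * w x \<partial>lborel)\<bar> \<le> W * (m + 1) * \<delta> n"
      by (simp add: algebra_simps)
  qed
  moreover have "J \<longlonglongrightarrow> 0" unfolding J_def I_def by (rule tendsto_enn2real) (use lim in auto)
  then have "(\<lambda>n. J n powr (1 / p)) \<longlonglongrightarrow> 0"
    by (rule tendsto_zero_powrI[OF _ tendsto_const]) (use J0 p in auto)
  from tendsto_add[OF this LIMSEQ_inverse_real_of_nat] have "\<delta> \<longlonglongrightarrow> 0"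
    unfolding \<delta>_def by simp
  then have "(\<lambda>n. W * (m + 1) * \<delta> n) \<longlonglongrightarrow> 0" by (rule tendsto_mult_right_zero)
  ultimately have "(\<lambda>n. (\<integral>x. f n x * w x \<partial>lborel) - (\<integral>x. F x * w x \<partial>lborel)) \<longlonglongrightarrow> 0"
    by (rule Lim_null_comparison)
  then show "(\<lambda>n. \<integral>x. f n x * w x \<partial>lborel) \<longlonglongrightarrow> (\<integral>x. F x * w x \<partial>lborel)"
    by (simp add: LIM_zero_iff)
qed

lemma W0_grad_integration_by_parts:
  fixes \<Omega> :: "'a::euclidean_space set"
  assumes W: "W0_grad \<Omega> p u g" and p: "1 \<le> p" and \<Omega>: "\<Omega> \<subseteq> cball 0 R"
    and P: "continuously_differentiable P" and i: "i \<in> Basis"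
  defines "K \<equiv> cball (0::'a) R"
  shows "integrable lborel (\<lambda>x. (g x \<bullet> i) * (P x * indicator K x))"
    and "integrable lborel (\<lambda>x. u x * (frechet_derivative P (at x) i * indicator K x))"
    and "(\<integral>x. (g x \<bullet> i) * (P x * indicator K x) \<partial>lborel) =
         - (\<integral>x. u x * (frechet_derivative P (at x) i * indicator K x) \<partial>lborel)"
proof -
  obtain \<phi> where tf: "\<And>n. test_fun \<Omega> (\<phi> n)"
    and lim_u: "(\<lambda>n. \<integral>\<^sup>+x. ennreal (\<bar>\<phi> n x - u x\<bar> powr p) \<partial>lborel) \<longlonglongrightarrow> 0"
    and lim_g: "(\<lambda>n. \<integral>\<^sup>+x. ennreal (norm (grad (\<phi> n) x - g x) powr p) \<partial>lborel) \<longlonglongrightarrow> 0"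
    and mu: "u \<in> borel_measurable lborel" and mg: "g \<in> borel_measurable lborel"
    using W unfolding W0_grad_def by blast
  note \<phi> = test_funD[OF tf]
  have K: "K \<in> sets lborel" "emeasure lborel K < \<infinity>"
    unfolding K_def using emeasure_compact_finite[of "cball (0::'a) R"] by auto
  have cP: "continuous_on UNIV P" "continuous_on UNIV (\<lambda>x. frechet_derivative P (at x) i)"
    using P continuously_differentiable_imp_continuous unfolding continuously_differentiable_def by auto
  obtain W1 where W1: "0 < W1" "\<And>x. x \<in> K \<Longrightarrow> \<bar>P x\<bar> \<le> W1"
    using continuous_bounded_on_cball[OF cP(1)] unfolding K_def by metis
  obtain W2 where W2: "0 < W2" "\<And>x. x \<in> K \<Longrightarrow> \<bar>frechet_derivative P (at x) i\<bar> \<le> W2"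
    using continuous_bounded_on_cball[OF cP(2)] unfolding K_def by metis
  have van: "R < norm x \<Longrightarrow> \<phi> n x = 0 \<and> frechet_derivative (\<phi> n) (at x) i = 0" for n x
  proof -
    assume "R < norm x"
    then have "x \<notin> \<Omega>" using \<Omega> by auto
    then show ?thesis using \<phi>(4,5)[of x n] by simp
  qed
  note parts = integration_by_parts_compact_support[OF \<phi>(1) \<phi>(3)[OF i] P van]
  have cut_off: "(\<lambda>x. frechet_derivative (\<phi> n) (at x) i * (P x * indicator K x)) =
      (\<lambda>x. frechet_derivative (\<phi> n) (at x) i * P x)"
    "(\<lambda>x. \<phi> n x * (frechet_derivative P (at x) i * indicator K x)) =
      (\<lambda>x. \<phi> n x * frechet_derivative P (at x) i)" for n
    using van[of _ n] by (auto simp: fun_eq_iff indicator_def K_def)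
  have lim_gi: "(\<lambda>n. \<integral>\<^sup>+x. ennreal (\<bar>frechet_derivative (\<phi> n) (at x) i - g x \<bullet> i\<bar> powr p) \<partial>lborel) \<longlonglongrightarrow> 0"
  proof (rule tendsto_sandwich[OF _ _ tendsto_const lim_g])
    have "\<bar>frechet_derivative (\<phi> n) (at x) i - g x \<bullet> i\<bar> \<le> norm (grad (\<phi> n) x - g x)" for n x
      using Basis_le_norm[OF i, of "grad (\<phi> n) x - g x"] by (simp add: inner_diff_left grad_inner_Basis[OF i])
    then show "\<forall>\<^sub>F n in sequentially. (\<integral>\<^sup>+x. ennreal (\<bar>frechet_derivative (\<phi> n) (at x) i - g x \<bullet> i\<bar> powr p) \<partial>lborel)
       \<le> (\<integral>\<^sup>+x. ennreal (norm (grad (\<phi> n) x - g x) powr p) \<partial>lborel)"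
      using p by (intro always_eventually allI nn_integral_mono ennreal_leI powr_mono2) auto
  qed simp
  have mP: "P \<in> borel_measurable lborel" "(\<lambda>x. frechet_derivative P (at x) i) \<in> borel_measurable lborel"
    using cP by (simp_all add: borel_measurable_continuous_onI)
  have meas: "(\<lambda>x. frechet_derivative (\<phi> n) (at x) i) \<in> borel_measurable lborel"
    "\<phi> n \<in> borel_measurable lborel"
    "(\<lambda>x. P x * indicator K x) \<in> borel_measurable lborel"
    "(\<lambda>x. frechet_derivative P (at x) i * indicator K x) \<in> borel_measurable lborel" for n
    using \<phi>(2) \<phi>(3)[OF i] mP K(1) by (simp_all add: borel_measurable_continuous_onI)
  have gi: "(\<lambda>x. g x \<bullet> i) \<in> borel_measurable lborel" using mg by measurable
  have bnd: "\<bar>P x * indicator K x\<bar> \<le> W1" "\<bar>frechet_derivative P (at x) i * indicator K x\<bar> \<le> W2" for x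
    using W1 W2 by (auto simp: indicator_def)
  have lim_left: "integrable lborel (\<lambda>x. (g x \<bullet> i) * (P x * indicator K x))"
    "(\<lambda>n. \<integral>x. frechet_derivative (\<phi> n) (at x) i * P x \<partial>lborel) \<longlonglongrightarrow>
      (\<integral>x. (g x \<bullet> i) * (P x * indicator K x) \<partial>lborel)"
    using Lp_tendsto_weighted_integral[OF p meas(1) gi meas(3) lim_gi bnd(1) _ K] parts(1)
    unfolding cut_off by auto
  have lim_right: "integrable lborel (\<lambda>x. u x * (frechet_derivative P (at x) i * indicator K x))"
    "(\<lambda>n. \<integral>x. \<phi> n x * frechet_derivative P (at x) i \<partial>lborel) \<longlonglongrightarrow>
      (\<integral>x. u x * (frechet_derivative P (at x) i * indicator K x) \<partial>lborel)"
    using Lp_tendsto_weighted_integral[OF p meas(2) mu meas(4) lim_u bnd(2) _ K] parts(2)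
    unfolding cut_off by auto
  show "integrable lborel (\<lambda>x. (g x \<bullet> i) * (P x * indicator K x))" 
    and "integrable lborel (\<lambda>x. u x * (frechet_derivative P (at x) i * indicator K x))"
    using lim_left(1) lim_right(1) by simp_all
  have "(\<lambda>n. \<integral>x. frechet_derivative (\<phi> n) (at x) i * P x \<partial>lborel) \<longlonglongrightarrow>
      - (\<integral>x. u x * (frechet_derivative P (at x) i * indicator K x) \<partial>lborel)"
    using tendsto_minus[OF lim_right(2)] parts(3) by simp
  then show "(\<integral>x. (g x \<bullet> i) * (P x * indicator K x) \<partial>lborel) =
      - (\<integral>x. u x * (frechet_derivative P (at x) i * indicator K x) \<partial>lborel)"
    using lim_left(2) LIMSEQ_unique by blast
qed

lemma W0_grad_vanishes_outside:
  fixes \<Omega> :: "'a::euclidean_space set"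
  assumes W: "W0_grad \<Omega> p u g" and p: "0 < p" and \<Omega>: "\<Omega> \<in> sets lborel"
  shows "AE x in lborel. x \<notin> \<Omega> \<longrightarrow> g x = 0"
proof -
  obtain \<phi> where tf: "\<And>n. test_fun \<Omega> (\<phi> n)"
    and lim: "(\<lambda>n. \<integral>\<^sup>+x. ennreal (norm (grad (\<phi> n) x - g x) powr p) \<partial>lborel) \<longlonglongrightarrow> 0"
    and mg: "g \<in> borel_measurable lborel"
    using W unfolding W0_grad_def by blast
  let ?I = "\<integral>\<^sup>+x. ennreal (norm (g x) powr p) * indicator (- \<Omega>) x \<partial>lborel"
  have grad0: "grad (\<phi> n) x = 0" if "x \<notin> \<Omega>" for n x
    unfolding grad_def using test_funD(5)[OF tf that] by simp
  have le: "?I \<le> (\<integral>\<^sup>+x. ennreal (norm (grad (\<phi> n) x - g x) powr p) \<partial>lborel)" for n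
  proof (rule nn_integral_mono)
    show "ennreal (norm (g x) powr p) * indicator (- \<Omega>) x \<le> ennreal (norm (grad (\<phi> n) x - g x) powr p)" for x
      using grad0[of x n] by (cases "x \<in> \<Omega>") simp_all
  qed
  have "?I \<le> 0" by (rule LIMSEQ_le_const[OF lim]) (use le in auto)
  then have "?I = 0" by simp
  moreover have "(\<lambda>x. ennreal (norm (g x) powr p) * indicator (- \<Omega>) x) \<in> borel_measurable lborel"
    using mg \<Omega> by measurable
  ultimately have "AE x in lborel. ennreal (norm (g x) powr p) * indicator (- \<Omega>) x = 0"
    using nn_integral_0_iff_AE by blast
  then show ?thesis
  proof (rule AE_mp, intro AE_I2 impI)
    fix x assume "ennreal (norm (g x) powr p) * indicator (- \<Omega>) x = 0" "x \<notin> \<Omega>"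
    then have "norm (g x) powr p \<le> 0" by simp
    then show "g x = 0" by (metis norm_eq_zero not_less powr_gt_zero)
  qed
qed

lemma W0_grad_components_agree:
  fixes \<Omega> :: "'a::euclidean_space set"
  assumes W: "W0_grad \<Omega> p u g" and W': "W0_grad \<Omega> p u' g'" and uu': "AE x in lborel. u x = u' x"
    and p: "1 \<le> p" and \<Omega>R: "\<Omega> \<subseteq> cball 0 R" and i: "i \<in> Basis"
  shows "AE x in lborel. (g x \<bullet> i - g' x \<bullet> i) * indicator (cball 0 R) x = 0"
proof (rule AE_eq_0_if_orthogonal_polynomials)
  have one: "continuously_differentiable (\<lambda>x::'a. 1)"
    by (rule continuously_differentiable_polynomial_function) simp
  have "integrable lborel (\<lambda>x. (g x \<bullet> i) * (1 * indicator (cball 0 R) x) - (g' x \<bullet> i) * (1 * indicator (cball 0 R) x))"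
    using W0_grad_integration_by_parts(1)[OF W p \<Omega>R one i]
      W0_grad_integration_by_parts(1)[OF W' p \<Omega>R one i]
    by (rule Bochner_Integration.integrable_diff)
  then show "integrable lborel (\<lambda>x. (g x \<bullet> i - g' x \<bullet> i) * indicator (cball 0 R) x)"
    by (simp add: left_diff_distrib)
  show "(g x \<bullet> i - g' x \<bullet> i) * indicator (cball 0 R) x = 0" if "x \<notin> cball 0 R" for x
    using that by simp
  fix P :: "'a \<Rightarrow> real" assume "polynomial_function P"
  then have P: "continuously_differentiable P" by (rule continuously_differentiable_polynomial_function)
  note parts = W0_grad_integration_by_parts[OF W p \<Omega>R P i]
    and parts' = W0_grad_integration_by_parts[OF W' p \<Omega>R P i]
  have "AE x in lborel. u x * (frechet_derivative P (at x) i * indicator (cball 0 R) x)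
      = u' x * (frechet_derivative P (at x) i * indicator (cball 0 R) x)"
    using uu' by eventually_elim simp
  then have same_u: "(\<integral>x. u x * (frechet_derivative P (at x) i * indicator (cball 0 R) x) \<partial>lborel)
      = (\<integral>x. u' x * (frechet_derivative P (at x) i * indicator (cball 0 R) x) \<partial>lborel)"
    by (rule integral_cong_AE[OF borel_measurable_integrable[OF parts(2)]
          borel_measurable_integrable[OF parts'(2)]])
  have "(\<integral>x. (g x \<bullet> i - g' x \<bullet> i) * indicator (cball 0 R) x * P x \<partial>lborel)
      = (\<integral>x. (g x \<bullet> i) * (P x * indicator (cball 0 R) x) - (g' x \<bullet> i) * (P x * indicator (cball 0 R) x) \<partial>lborel)"
    by (rule Bochner_Integration.integral_cong) (auto simp: algebra_simps)
  also have "\<dots> = (\<integral>x. (g x \<bullet> i) * (P x * indicator (cball 0 R) x) \<partial>lborel)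
      - (\<integral>x. (g' x \<bullet> i) * (P x * indicator (cball 0 R) x) \<partial>lborel)"
    by (rule Bochner_Integration.integral_diff[OF parts(1) parts'(1)])
  also have "\<dots> = 0" unfolding parts(3) parts'(3) same_u by simp
  finally show "(\<integral>x. (g x \<bullet> i - g' x \<bullet> i) * indicator (cball 0 R) x * P x \<partial>lborel) = 0" .
qed

lemma W0_grad_unique:
  fixes \<Omega> :: "'a::euclidean_space set"
  assumes W: "W0_grad \<Omega> p u g" and W': "W0_grad \<Omega> p u' g'" and uu': "AE x in lborel. u x = u' x"
    and p: "1 \<le> p" and \<Omega>: "bounded \<Omega>" "\<Omega> \<in> sets lborel"
  shows "AE x in lborel. g x = g' x"
proof -
  obtain R where \<Omega>R: "\<Omega> \<subseteq> cball 0 R"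
    using bounded_subset_ballD[OF \<Omega>(1), of 0] ball_subset_cball by blast
  let ?K = "cball (0::'a) R"
  have "AE x in lborel. \<forall>i\<in>Basis. (g x \<bullet> i - g' x \<bullet> i) * indicator ?K x = 0"
    by (rule eventually_ball_finite[OF finite_Basis])
      (use W0_grad_components_agree[OF W W' uu' p \<Omega>R] in blast)
  moreover have "AE x in lborel. x \<notin> \<Omega> \<longrightarrow> g x = 0"
    by (rule W0_grad_vanishes_outside[OF W _ \<Omega>(2)]) (use p in linarith)
  moreover have "AE x in lborel. x \<notin> \<Omega> \<longrightarrow> g' x = 0"
    by (rule W0_grad_vanishes_outside[OF W' _ \<Omega>(2)]) (use p in linarith)
  ultimately show ?thesis
  proof eventually_elim
    case (elim x)
    show ?case
    proof (cases "x \<in> ?K")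
      case True
      show ?thesis
      proof (rule euclidean_eqI)
        fix i :: 'a assume "i \<in> Basis"
        then show "g x \<bullet> i = g' x \<bullet> i" using elim(1) True by simp
      qed
    next
      case False
      then have "x \<notin> \<Omega>" using \<Omega>R by blast
      then show ?thesis using elim(2,3) by simp
    qed
  qed
qed

lemma Ck_on_cmult: "Ck_on UNIV n f \<Longrightarrow> Ck_on UNIV n (\<lambda>x. c * f x)"
proof (induction n arbitrary: f)
  case 0
  then show ?case by (simp add: continuous_on_mult_left)
next
  case (Suc n)
  have d: "((\<lambda>x. c * f x) has_derivative (\<lambda>h. c * frechet_derivative f (at x) h)) (at x)" for x
    using Suc.prems by (auto intro!: has_derivative_mult_right simp: frechet_derivative_works)
  then have fd: "frechet_derivative (\<lambda>x. c * f x) (at x) = (\<lambda>h. c * frechet_derivative f (at x) h)" for x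
    using frechet_derivative_at by metis
  show ?case unfolding Ck_on.simps fd
  proof (intro conjI ballI allI)
    show "(\<lambda>x. c * f x) differentiable (at x)" for x using d differentiable_def by blast
    show "continuous_on UNIV (\<lambda>x. c * f x)" using Suc.prems by (simp add: continuous_on_mult_left)
    show "Ck_on UNIV n (\<lambda>x. c * frechet_derivative f (at x) i)" if "i \<in> Basis" for i
      using Suc.prems that by (intro Suc.IH) simp
  qed
qed

lemma test_fun_cmult:
  assumes "test_fun \<Omega> \<phi>"
  shows "test_fun \<Omega> (\<lambda>x. c * \<phi> x)"
proof -
  have sub: "{x. c * \<phi> x \<noteq> 0} \<subseteq> {x. \<phi> x \<noteq> 0}" by auto
  then have "closure {x. c * \<phi> x \<noteq> 0} \<subseteq> closure {x. \<phi> x \<noteq> 0}" by (rule closure_mono)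
  moreover have "bounded {x. \<phi> x \<noteq> 0}" using assms unfolding test_fun_def by (simp add: compact_closure)
  then have "compact (closure {x. c * \<phi> x \<noteq> 0})" using bounded_subset[OF _ sub] by (simp add: compact_closure)
  ultimately show ?thesis
    using assms unfolding test_fun_def smooth_fun_on_def by (auto intro: Ck_on_cmult)
qed

lemma grad_cmult:
  assumes "\<phi> differentiable (at x)"
  shows "grad (\<lambda>x. c * \<phi> x) x = c *\<^sub>R grad \<phi> x"
proof -
  have "((\<lambda>x. c * \<phi> x) has_derivative (\<lambda>h. c * frechet_derivative \<phi> (at x) h)) (at x)"
    using assms by (auto intro!: has_derivative_mult_right simp: frechet_derivative_works)
  then have "frechet_derivative (\<lambda>x. c * \<phi> x) (at x) = (\<lambda>h. c * frechet_derivative \<phi> (at x) h)"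
    using frechet_derivative_at by metis
  then show ?thesis unfolding grad_def by (simp add: scaleR_sum_right)
qed

lemma tendsto_nn_integral_cmult_zero:
  fixes f :: "nat \<Rightarrow> 'a \<Rightarrow> ennreal"
  assumes "(\<lambda>n. \<integral>\<^sup>+x. f n x \<partial>M) \<longlonglongrightarrow> 0" "\<And>n. f n \<in> borel_measurable M"
  shows "(\<lambda>n. \<integral>\<^sup>+x. ennreal c * f n x \<partial>M) \<longlonglongrightarrow> 0"
  using ennreal_tendsto_cmult[OF _ assms(1), of "ennreal c"] by (simp add: nn_integral_cmult assms(2))

lemma W0_grad_cmult:
  fixes \<Omega> :: "'a::euclidean_space set"
  assumes W: "W0_grad \<Omega> p u g" and p: "0 < p"
  shows "W0_grad \<Omega> p (\<lambda>x. c * u x) (\<lambda>x. c *\<^sub>R g x)"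
proof -
  obtain \<phi> where tf: "\<And>n. test_fun \<Omega> (\<phi> n)"
    and lim_u: "(\<lambda>n. \<integral>\<^sup>+x. ennreal (\<bar>\<phi> n x - u x\<bar> powr p) \<partial>lborel) \<longlonglongrightarrow> 0"
    and lim_g: "(\<lambda>n. \<integral>\<^sup>+x. ennreal (norm (grad (\<phi> n) x - g x) powr p) \<partial>lborel) \<longlonglongrightarrow> 0"
    and mu: "u \<in> borel_measurable lborel" and mg: "g \<in> borel_measurable lborel"
    and u0: "\<forall>x. x \<notin> \<Omega> \<longrightarrow> u x = 0"
    using W unfolding W0_grad_def by blast
  note \<phi> = test_funD[OF tf]
  have m\<phi>: "\<phi> n \<in> borel_measurable lborel" for n
    using \<phi>(2) by (simp add: borel_measurable_continuous_onI)
  have "(\<lambda>x. frechet_derivative (\<phi> n) (at x) i) \<in> borel_measurable lborel" if "i \<in> Basis" for i n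
    using \<phi>(3)[OF that] by (simp add: borel_measurable_continuous_onI)
  then have mgrad: "grad (\<phi> n) \<in> borel_measurable lborel" for n
    unfolding grad_def by (intro borel_measurable_sum) auto
  have e1: "ennreal (\<bar>c * \<phi> n x - c * u x\<bar> powr p)
      = ennreal (\<bar>c\<bar> powr p) * ennreal (\<bar>\<phi> n x - u x\<bar> powr p)" for n x
  proof -
    have "\<bar>c * \<phi> n x - c * u x\<bar> = \<bar>c\<bar> * \<bar>\<phi> n x - u x\<bar>" by (simp add: abs_mult[symmetric] algebra_simps)
    then show ?thesis by (simp add: powr_mult ennreal_mult)
  qed
  have lim_cu: "(\<lambda>n. \<integral>\<^sup>+x. ennreal (\<bar>c * \<phi> n x - c * u x\<bar> powr p) \<partial>lborel) \<longlonglongrightarrow> 0"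
    unfolding e1 by (rule tendsto_nn_integral_cmult_zero[OF lim_u]) (use m\<phi> mu in measurable)
  have e2: "ennreal (norm (grad (\<lambda>x. c * \<phi> n x) x - c *\<^sub>R g x) powr p)
      = ennreal (\<bar>c\<bar> powr p) * ennreal (norm (grad (\<phi> n) x - g x) powr p)" for n x
  proof -
    have "norm (grad (\<lambda>x. c * \<phi> n x) x - c *\<^sub>R g x) = \<bar>c\<bar> * norm (grad (\<phi> n) x - g x)"
      by (simp add: grad_cmult[OF \<phi>(1)] scaleR_diff_right[symmetric])
    then show ?thesis by (simp add: powr_mult ennreal_mult)
  qed
  have lim_cg: "(\<lambda>n. \<integral>\<^sup>+x. ennreal (norm (grad (\<lambda>x. c * \<phi> n x) x - c *\<^sub>R g x) powr p) \<partial>lborel)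
      \<longlonglongrightarrow> 0"
    unfolding e2 by (rule tendsto_nn_integral_cmult_zero[OF lim_g]) (use mgrad mg in measurable)
  show ?thesis unfolding W0_grad_def
  proof (intro conjI exI[of _ "\<lambda>n x. c * \<phi> n x"] allI impI)
    show "(\<lambda>x. c * u x) \<in> borel_measurable lborel" using mu by measurable
    show "(\<lambda>x. c *\<^sub>R g x) \<in> borel_measurable lborel" using mg by measurable
    show "c * u x = 0" if "x \<notin> \<Omega>" for x using u0 that by simp
    show "test_fun \<Omega> (\<lambda>x. c * \<phi> n x)" for n by (rule test_fun_cmult[OF tf])
  qed (fact lim_cu lim_cg)+
qed

lemma W0_grad_gradW: "u \<in> W0 \<Omega> p \<Longrightarrow> W0_grad \<Omega> p u (gradW \<Omega> p u)"
  using someI[of "W0_grad \<Omega> p u"] unfolding W0_def gradW_def by blast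

lemma gradW_cmult:
  fixes \<Omega> :: "'a::euclidean_space set"
  assumes u: "u \<in> W0 \<Omega> p" and p: "1 \<le> p" and \<Omega>: "bounded \<Omega>" "\<Omega> \<in> sets lborel"
  shows "AE x in lborel. gradW \<Omega> p (\<lambda>x. c * u x) x = c *\<^sub>R gradW \<Omega> p u x"
proof -
  have W: "W0_grad \<Omega> p (\<lambda>x. c * u x) (\<lambda>x. c *\<^sub>R gradW \<Omega> p u x)"
    using W0_grad_cmult[OF W0_grad_gradW[OF u]] p by simp
  then have "(\<lambda>x. c * u x) \<in> W0 \<Omega> p" unfolding W0_def by blast
  from W0_grad_unique[OF W0_grad_gradW[OF this] W _ p \<Omega>] show ?thesis by simp
qed

lemma abs_add_powr_le:
  fixes a b p :: real
  assumes "0 \<le> p"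
  shows "\<bar>a + b\<bar> powr p \<le> 2 powr p * (\<bar>a\<bar> powr p + \<bar>b\<bar> powr p)"
proof -
  have "\<bar>a + b\<bar> powr p \<le> (2 * max \<bar>a\<bar> \<bar>b\<bar>) powr p" using assms by (intro powr_mono2) auto
  also have "\<dots> = 2 powr p * max \<bar>a\<bar> \<bar>b\<bar> powr p" by (simp add: powr_mult)
  also have "\<dots> \<le> 2 powr p * (\<bar>a\<bar> powr p + \<bar>b\<bar> powr p)"
    by (intro mult_left_mono) (auto simp: max_def)
  finally show ?thesis .
qed

lemma W0_grad_integrable_powr:
  fixes \<Omega> :: "'a::euclidean_space set"
  assumes W: "W0_grad \<Omega> p u g" and p: "0 < p" and \<Omega>: "bounded \<Omega>"
  shows "integrable lborel (\<lambda>x. \<bar>u x\<bar> powr p)"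
proof -
  obtain R where \<Omega>R: "\<Omega> \<subseteq> cball 0 R"
    using bounded_subset_ballD[OF \<Omega>, of 0] ball_subset_cball by blast
  obtain \<phi> where tf: "\<And>n. test_fun \<Omega> (\<phi> n)"
    and lim: "(\<lambda>n. \<integral>\<^sup>+x. ennreal (\<bar>\<phi> n x - u x\<bar> powr p) \<partial>lborel) \<longlonglongrightarrow> 0"
    and mu: "u \<in> borel_measurable lborel"
    using W unfolding W0_grad_def by blast
  obtain N where N: "(\<integral>\<^sup>+x. ennreal (\<bar>\<phi> N x - u x\<bar> powr p) \<partial>lborel) < 1"
    using order_tendstoD(2)[OF lim, of 1] by (auto simp: eventually_sequentially)
  have m\<phi>: "\<phi> N \<in> borel_measurable lborel"
    using test_funD(2)[OF tf] by (simp add: borel_measurable_continuous_onI)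
  have int_diff: "integrable lborel (\<lambda>x. \<bar>\<phi> N x - u x\<bar> powr p)"
  proof (rule integrableI_bounded)
    show "(\<lambda>x. \<bar>\<phi> N x - u x\<bar> powr p) \<in> borel_measurable lborel" using m\<phi> mu by measurable
    show "(\<integral>\<^sup>+x. ennreal (norm (\<bar>\<phi> N x - u x\<bar> powr p)) \<partial>lborel) < \<infinity>"
      using N ennreal_less_top order.strict_trans by fastforce
  qed
  have van: "\<phi> N x = 0" if "R < norm x" for x
  proof -
    have "x \<notin> \<Omega>" using that \<Omega>R by auto
    then show ?thesis using test_funD(4)[OF tf] by simp
  qed
  obtain B where B: "\<And>x. \<bar>\<phi> N x\<bar> \<le> B"
    using continuous_vanishing_outside_cball(2)[OF test_funD(2)[OF tf] van] by blast
  have int_K: "integrable lborel (\<lambda>x::'a. B powr p * indicator (cball 0 R) x)"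
    using emeasure_compact_finite[of "cball (0::'a) R"] by (simp add: integrable_real_indicator)
  have bound_\<phi>: "\<bar>\<phi> N x\<bar> powr p \<le> B powr p * indicator (cball 0 R) x" for x
  proof (cases "R < norm x")
    case False
    then have "x \<in> cball 0 R" by simp
    then show ?thesis using B[of x] p by (simp add: powr_mono2)
  qed (simp add: van)
  define G where "G x = 2 powr p * (\<bar>\<phi> N x - u x\<bar> powr p + B powr p * indicator (cball 0 R) x)" for x
  have pointwise: "\<bar>u x\<bar> powr p \<le> G x" for x
  proof -
    have "\<bar>u x\<bar> powr p = \<bar>(\<phi> N x - u x) - \<phi> N x\<bar> powr p" by (simp add: abs_minus_commute)
    also have "\<dots> \<le> 2 powr p * (\<bar>\<phi> N x - u x\<bar> powr p + \<bar>- \<phi> N x\<bar> powr p)"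
      using abs_add_powr_le[of p "\<phi> N x - u x" "- \<phi> N x"] p by simp
    also have "\<dots> \<le> G x"
      unfolding G_def abs_minus_cancel by (intro mult_left_mono add_left_mono bound_\<phi>) simp
    finally show ?thesis .
  qed
  show ?thesis
  proof (rule Bochner_Integration.integrable_bound)
    show "integrable lborel G" unfolding G_def using int_diff int_K by simp
    show "(\<lambda>x. \<bar>u x\<bar> powr p) \<in> borel_measurable lborel" using mu by measurable
    show "AE x in lborel. norm (\<bar>u x\<bar> powr p) \<le> norm (G x)"
      using pointwise by (intro AE_I2) (simp add: order_trans[OF _ abs_ge_self])
  qed
qed

lemma powr_le_split_weighted:
  fixes a \<epsilon> p ps \<sigma> r R :: real
  assumes "0 < \<epsilon>" "0 \<le> p" "p < ps" "0 < \<sigma>" "0 < r" "r \<le> R" "0 \<le> a"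
  shows "a powr p \<le> \<epsilon> powr p + \<epsilon> powr (p - ps) * R powr \<sigma> * (a powr ps * r powr (- \<sigma>))"
proof (cases "a \<le> \<epsilon>")
  case True
  then have "a powr p \<le> \<epsilon> powr p" using assms by (intro powr_mono2) auto
  then show ?thesis by (simp add: add_increasing2)
next
  case False
  then have a: "0 < a" using assms by linarith
  have r: "1 \<le> R powr \<sigma> * r powr (- \<sigma>)"
    using assms powr_mono2[of \<sigma> r R] by (simp add: powr_minus divide_simps)
  have "a powr p = a powr ps * a powr (p - ps)" using a by (simp add: powr_add[symmetric])
  also have "\<dots> \<le> a powr ps * \<epsilon> powr (p - ps)"
    using False assms by (intro mult_left_mono powr_mono2') auto
  also have "\<dots> = (\<epsilon> powr (p - ps) * a powr ps) * 1" by simp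
  also have "\<dots> \<le> (\<epsilon> powr (p - ps) * a powr ps) * (R powr \<sigma> * r powr (- \<sigma>))"
    using r by (intro mult_left_mono) auto
  also have "\<dots> = \<epsilon> powr (p - ps) * R powr \<sigma> * (a powr ps * r powr (- \<sigma>))" by (simp add: algebra_simps)
  finally show ?thesis by (simp add: add_increasing)
qed

lemma lower_bound_from_splitting:
  fixes L V R p ps \<sigma> b :: real
  assumes L: "0 < L" and V: "0 \<le> V" and R: "0 < R" and p: "0 < p" "p < ps"
    and split: "\<And>\<epsilon>. 0 < \<epsilon> \<Longrightarrow> L \<le> \<epsilon> powr p * V + \<epsilon> powr (p - ps) * R powr \<sigma> * b"
  shows "1 / 2 * (2 * (V + 1)) powr (- ((ps - p) / p)) * R powr (- \<sigma>) * L powr (ps / p) \<le> b"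
proof -
  define \<epsilon> where "\<epsilon> = (L / (2 * (V + 1))) powr (1 / p)"
  have \<epsilon>: "0 < \<epsilon>" unfolding \<epsilon>_def using L V by simp
  have "\<epsilon> powr p * V = L / 2 * (V / (V + 1))"
    unfolding \<epsilon>_def using L V p by (simp add: powr_powr field_simps)
  also have "\<dots> \<le> L / 2" using L V by (intro mult_left_le) (simp_all add: divide_le_eq_1_pos)
  finally have "L / 2 \<le> \<epsilon> powr (p - ps) * R powr \<sigma> * b" using split[OF \<epsilon>] by linarith
  then have "L / 2 * (\<epsilon> powr (ps - p) * R powr (- \<sigma>)) \<le> b"
    using \<epsilon> R by (simp add: powr_minus powr_diff field_simps)
  moreover have "L / 2 * (\<epsilon> powr (ps - p) * R powr (- \<sigma>))
      = 1 / 2 * (2 * (V + 1)) powr (- ((ps - p) / p)) * R powr (- \<sigma>) * L powr (ps / p)"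
  proof -
    have "\<epsilon> powr (ps - p) = (L / (2 * (V + 1))) powr ((ps - p) / p)"
      unfolding \<epsilon>_def using L V p by (simp add: powr_powr)
    also have "\<dots> = L powr ((ps - p) / p) / (2 * (V + 1)) powr ((ps - p) / p)"
      using L V by (simp add: powr_divide)
    also have "\<dots> = L powr ((ps - p) / p) * (2 * (V + 1)) powr (- ((ps - p) / p))"
      by (simp only: powr_minus divide_inverse)
    finally have "\<epsilon> powr (ps - p) = L powr ((ps - p) / p) * (2 * (V + 1)) powr (- ((ps - p) / p))" .
    moreover have "L * L powr ((ps - p) / p) = L powr (ps / p)"
    proof -
      have "L * L powr ((ps - p) / p) = L powr (1 + (ps - p) / p)" using L by (simp add: powr_add)
      also have "1 + (ps - p) / p = ps / p" using p by (simp add: field_simps)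
      finally show ?thesis .
    qed
    ultimately show ?thesis by (simp add: algebra_simps)
  qed
  ultimately show ?thesis by linarith
qed

text \<open>Not the exact maximum over \<open>s\<close>: the difference is nonpositive unless
  \<open>s\<^bsup>q-p\<^esup> < \<alpha>/\<beta>\<close>, and then it is at most \<open>\<alpha> s\<^sup>p\<close>.\<close>
lemma powr_difference_le:
  fixes \<alpha> \<beta> s p q :: real
  assumes "0 \<le> \<alpha>" "0 < \<beta>" "0 \<le> s" "0 < p" "p < q"
  shows "\<alpha> * s powr p - \<beta> * s powr q \<le> \<alpha> powr (q / (q - p)) * \<beta> powr (- p / (q - p))"
proof (cases "\<alpha> / \<beta> \<le> s powr (q - p)")
  case True
  then have "\<alpha> \<le> \<beta> * s powr (q - p)" using assms by (simp add: divide_simps mult.commute)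
  then have "\<alpha> * s powr p \<le> \<beta> * s powr (q - p) * s powr p" using assms by (intro mult_right_mono) auto
  also have "\<dots> = \<beta> * s powr q" using assms by (cases "s = 0") (simp_all add: powr_add[symmetric])
  finally have "\<alpha> * s powr p - \<beta> * s powr q \<le> 0" by simp
  also have "0 \<le> \<alpha> powr (q / (q - p)) * \<beta> powr (- p / (q - p))" by simp
  finally show ?thesis .
next
  case False
  have "s = (s powr (q - p)) powr (1 / (q - p))" using assms by (simp add: powr_powr)
  also have "\<dots> \<le> (\<alpha> / \<beta>) powr (1 / (q - p))" using False assms by (intro powr_mono2) auto
  finally have "s powr p \<le> ((\<alpha> / \<beta>) powr (1 / (q - p))) powr p" using assms by (intro powr_mono2) auto
  then have "\<alpha> * s powr p \<le> \<alpha> * (\<alpha> / \<beta>) powr (p / (q - p))"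
    using assms by (simp add: powr_powr mult_left_mono)
  also have "\<alpha> * (\<alpha> / \<beta>) powr (p / (q - p)) = \<alpha> powr (q / (q - p)) * \<beta> powr (- p / (q - p))"
  proof (cases "\<alpha> = 0")
    case False
    then have "0 < \<alpha>" using assms by simp
    then have "\<alpha> * (\<alpha> / \<beta>) powr (p / (q - p)) = \<alpha> powr 1 * (\<alpha> powr (p / (q - p)) * \<beta> powr (- p / (q - p)))"
      using assms by (simp add: powr_divide powr_minus divide_simps)
    also have "\<dots> = \<alpha> powr (1 + p / (q - p)) * \<beta> powr (- p / (q - p))" by (simp add: powr_add)
    also have "1 + p / (q - p) = q / (q - p)" using assms by (simp add: field_simps)
    finally show ?thesis .
  qed (use assms in simp)
  finally have "\<alpha> * s powr p \<le> \<alpha> powr (q / (q - p)) * \<beta> powr (- p / (q - p))" .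
  moreover have "0 \<le> \<beta> * s powr q" using assms by simp
  ultimately show ?thesis by linarith
qed

lemma ray_maximum_le:
  fixes a \<kappa> L t p ps :: real
  assumes "0 \<le> a" "0 < \<kappa>" "0 < L" "0 \<le> t" "0 < p" "p < ps"
  shows "t powr p * (a * L / p) - t powr ps / ps * \<kappa> * L powr (ps / p)
    \<le> (a / p) powr (ps / (ps - p)) * (\<kappa> / ps) powr (- p / (ps - p))"
proof -
  define s where "s = t * L powr (1 / p)"
  have "s powr p = t powr p * L" "s powr ps = t powr ps * L powr (ps / p)"
    unfolding s_def using assms by (simp_all add: powr_mult powr_powr)
  then have "t powr p * (a * L / p) - t powr ps / ps * \<kappa> * L powr (ps / p)
      = (a / p) * s powr p - (\<kappa> / ps) * s powr ps"
    by (simp add: algebra_simps)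
  also have "\<dots> \<le> (a / p) powr (ps / (ps - p)) * (\<kappa> / ps) powr (- p / (ps - p))"
    unfolding s_def using assms by (intro powr_difference_le) auto
  finally show ?thesis .
qed

lemma hardy_sobolev_exponent_ratio:
  fixes N p \<sigma> :: real
  assumes "\<sigma> < p" "p < N" "0 < p"
  shows "((N - \<sigma>) * p / (N - p)) / ((N - \<sigma>) * p / (N - p) - p) = (N - \<sigma>) / (p - \<sigma>)"
proof -
  have "(N - \<sigma>) * p / (N - p) - p = p * (p - \<sigma>) / (N - p)" using assms by (simp add: field_simps)
  moreover have "((N - \<sigma>) * p / (N - p)) / (p * (p - \<sigma>) / (N - p)) = (N - \<sigma>) / (p - \<sigma>)"
    using assms by (simp add: divide_simps)
  ultimately show ?thesis by simp
qed

lemma powr_scaled_base: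
  fixes c \<rho> \<alpha> e q :: real
  shows "(c * \<rho> powr \<alpha> / q) powr e = (c / q) powr e * \<rho> powr (\<alpha> * e)"
proof -
  have "c * \<rho> powr \<alpha> / q = c / q * \<rho> powr \<alpha>" by simp
  then show ?thesis by (simp only: powr_mult powr_powr)
qed

section \<open>The energy along rays\<close>

lemma Mfd_gradW_integral:
  assumes v: "v \<in> Mfd \<Omega> p" and p: "0 < p"
  shows "(\<integral>x. norm (gradW \<Omega> p v x) powr p \<partial>lborel) = p"
    and "integrable lborel (\<lambda>x. norm (gradW \<Omega> p v x) powr p)"
proof -
  define I where "I = (\<integral>x. norm (gradW \<Omega> p v x) powr p \<partial>lborel)"
  have "I \<ge> 0" unfolding I_def by simp
  have "(I powr (1 / p)) powr p = p"
    using v unfolding Mfd_def normW_def I_def by simp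
  then show I: "I = p" using \<open>I \<ge> 0\<close> p by (cases "I = 0") (simp_all add: powr_powr)
  show "integrable lborel (\<lambda>x. norm (gradW \<Omega> p v x) powr p)"
  proof (rule ccontr)
    assume "\<not> ?thesis"
    then have "I = 0" unfolding I_def by (rule not_integrable_integral_eq)
    with I p show False by simp
  qed
qed

lemma Lp_pow_pos_Mfd:
  fixes \<Omega> :: "'a::euclidean_space set"
  assumes v: "v \<in> Mfd \<Omega> p" and p: "1 \<le> p" and \<Omega>: "bounded \<Omega>" "\<Omega> \<in> sets lborel"
  shows "0 < Lp_pow p v"
proof (rule ccontr)
  assume "\<not> 0 < Lp_pow p v"
  moreover have "0 \<le> Lp_pow p v" unfolding Lp_pow_def by simp
  ultimately have "Lp_pow p v = 0" by simp
  have W: "W0_grad \<Omega> p v (gradW \<Omega> p v)"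
    using v unfolding Mfd_def by (auto intro: W0_grad_gradW)
  have "integrable lborel (\<lambda>x. \<bar>v x\<bar> powr p)"
    using W0_grad_integrable_powr[OF W _ \<Omega>(1)] p by simp
  then have "AE x in lborel. \<bar>v x\<bar> powr p = 0"
    using \<open>Lp_pow p v = 0\<close> unfolding Lp_pow_def by (subst integral_nonneg_eq_0_iff_AE[symmetric]) auto
  then have "AE x in lborel. v x = 0 * v x" by eventually_elim simp
  from W0_grad_unique[OF W W0_grad_cmult[OF W] this p \<Omega>] p
  have "AE x in lborel. norm (gradW \<Omega> p v x) powr p = 0" by (auto elim: AE_mp)
  then have "(\<integral>x. norm (gradW \<Omega> p v x) powr p \<partial>lborel) = 0" by (rule integral_eq_zero_AE)
  with Mfd_gradW_integral(1)[OF v] p show False by simp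
qed

lemma Mfd_ray_gradient_integral:
  fixes \<Omega> :: "'a::euclidean_space set" and v :: "'a \<Rightarrow> real"
  assumes \<Omega>: "bounded \<Omega>" "\<Omega> \<in> sets lborel" and p: "1 \<le> p" and v: "v \<in> Mfd \<Omega> p" and t: "0 \<le> t"
  defines "A \<equiv> \<lambda>x. indicator \<Omega> x * (norm (gradW \<Omega> p (\<lambda>x. t * v x) x) powr p / p)"
  shows "integrable lborel A" and "(\<integral>x. A x \<partial>lborel) = t powr p"
proof -
  define gv where "gv = gradW \<Omega> p v"
  define gt where "gt = gradW \<Omega> p (\<lambda>x. t * v x)"
  have p0: "0 < p" using p by linarith
  have vW: "v \<in> W0 \<Omega> p" using v unfolding Mfd_def by simp
  have W: "W0_grad \<Omega> p v gv" unfolding gv_def by (rule W0_grad_gradW[OF vW])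
  have "W0_grad \<Omega> p (\<lambda>x. t * v x) (\<lambda>x. t *\<^sub>R gv x)" by (rule W0_grad_cmult[OF W p0])
  then have "(\<lambda>x. t * v x) \<in> W0 \<Omega> p" unfolding W0_def by blast
  then have "W0_grad \<Omega> p (\<lambda>x. t * v x) gt" unfolding gt_def by (rule W0_grad_gradW)
  then have "gt \<in> borel_measurable lborel" unfolding W0_grad_def by blast
  then have "(\<lambda>x. norm (gt x) powr p / p) \<in> borel_measurable lborel" by measurable
  then have mA: "A \<in> borel_measurable lborel"
    unfolding A_def gt_def[symmetric] using \<Omega>(2) by (intro borel_measurable_times borel_measurable_indicator)
  have gt: "AE x in lborel. gt x = t *\<^sub>R gv x"
    unfolding gt_def gv_def by (rule gradW_cmult[OF vW p \<Omega>])
  have gv0: "AE x in lborel. x \<notin> \<Omega> \<longrightarrow> gv x = 0" by (rule W0_grad_vanishes_outside[OF W p0 \<Omega>(2)])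
  have aeA: "AE x in lborel. A x = t powr p / p * norm (gv x) powr p"
    using gt gv0
  proof eventually_elim
    case (elim x)
    then show ?case using t by (cases "x \<in> \<Omega>") (simp_all add: A_def gt_def[symmetric] powr_mult)
  qed
  note I = Mfd_gradW_integral[OF v p0, folded gv_def]
  have int_gv: "integrable lborel (\<lambda>x. t powr p / p * norm (gv x) powr p)"
    using I(2) by simp
  note cong = integrable_cong_AE[OF mA borel_measurable_integrable[OF int_gv] aeA]
    integral_cong_AE[OF mA borel_measurable_integrable[OF int_gv] aeA]
  show "integrable lborel A" using cong(1) int_gv by simp
  show "(\<integral>x. A x \<partial>lborel) = t powr p" using cong(2) I(1) p0 by simp
qed

text \<open>The alternative \<open>E0 \<dots> = 0\<close> covers the junk value of the integral of a non-integrable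
  function.\<close>
lemma E0_ray:
  fixes \<Omega> :: "'a::euclidean_space set" and v :: "'a \<Rightarrow> real"
  assumes \<Omega>: "bounded \<Omega>" "\<Omega> \<in> sets lborel"
    and p: "1 \<le> p" "p < real DIM('a)" and \<sigma>: "\<sigma> < p"
    and v: "v \<in> Mfd \<Omega> p" and t: "0 \<le> t"
    and ps_def: "ps = (real DIM('a) - \<sigma>) * p / (real DIM('a) - p)"
  defines "c \<equiv> \<lambda>x. indicator \<Omega> x * (\<bar>v x\<bar> powr ps * norm x powr (- \<sigma>))"
  shows "E0 \<Omega> p \<sigma> lm (\<lambda>x. t * v x) = 0 \<or>
    (E0 \<Omega> p \<sigma> lm (\<lambda>x. t * v x) = t powr p * (1 - lm * Lp_pow p v / p) - t powr ps / ps * (\<integral>x. c x \<partial>lborel)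
      \<and> (0 < t \<longrightarrow> integrable lborel c))"
proof -
  have ps: "0 < ps" unfolding ps_def using p \<sigma> by (simp add: divide_pos_pos)
  have W: "W0_grad \<Omega> p v (gradW \<Omega> p v)" using v unfolding Mfd_def by (auto intro: W0_grad_gradW)
  have v0: "v x = 0" if "x \<notin> \<Omega>" for x using W that unfolding W0_grad_def by blast
  have int_v: "integrable lborel (\<lambda>x. \<bar>v x\<bar> powr p)"
    by (rule W0_grad_integrable_powr[OF W _ \<Omega>(1)]) (use p in linarith)
  define A where "A x = indicator \<Omega> x * (norm (gradW \<Omega> p (\<lambda>x. t * v x) x) powr p / p)" for x
  define B where "B x = lm / p * t powr p * \<bar>v x\<bar> powr p" for x
  define C where "C x = t powr ps / ps * c x" for x
  note A = Mfd_ray_gradient_integral[OF \<Omega> p(1) v t, folded A_def]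
  have int_B: "integrable lborel B" unfolding B_def using int_v by simp
  have B: "(\<integral>x. B x \<partial>lborel) = lm / p * t powr p * Lp_pow p v"
    unfolding B_def Lp_pow_def by simp
  have E0_eq: "E0 \<Omega> p \<sigma> lm (\<lambda>x. t * v x) = (\<integral>x. A x - B x - C x \<partial>lborel)"
  proof -
    have "indicator \<Omega> x * (norm (gradW \<Omega> p (\<lambda>x. t * v x) x) powr p / p - lm / p * \<bar>t * v x\<bar> powr p
        - \<bar>t * v x\<bar> powr ps / ps * norm x powr (- \<sigma>)) = A x - B x - C x" for x
    proof (cases "x \<in> \<Omega>")
      case True
      then show ?thesis using t unfolding A_def B_def C_def c_def
        by (simp add: abs_mult powr_mult algebra_simps)
    qed (simp add: A_def B_def C_def c_def v0)
    then show ?thesis unfolding E0_def Let_def set_lebesgue_integral_def ps_def by simp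
  qed
  show ?thesis
  proof (cases "integrable lborel (\<lambda>x. A x - B x - C x)")
    case False
    then show ?thesis unfolding E0_eq by (simp add: not_integrable_integral_eq)
  next
    case True
    have "integrable lborel (\<lambda>x. A x - B x - (A x - B x - C x))"
      by (rule Bochner_Integration.integrable_diff[OF Bochner_Integration.integrable_diff[OF A(1) int_B] True])
    then have int_C: "integrable lborel C" by simp
    have "E0 \<Omega> p \<sigma> lm (\<lambda>x. t * v x) = (\<integral>x. A x \<partial>lborel) - (\<integral>x. B x \<partial>lborel) - (\<integral>x. C x \<partial>lborel)"
      unfolding E0_eq using A(1) int_B int_C by simp
    also have "\<dots> = t powr p * (1 - lm * Lp_pow p v / p) - t powr ps / ps * (\<integral>x. c x \<partial>lborel)"
      unfolding A(2) B C_def by (simp add: algebra_simps)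
    finally have "E0 \<Omega> p \<sigma> lm (\<lambda>x. t * v x)
        = t powr p * (1 - lm * Lp_pow p v / p) - t powr ps / ps * (\<integral>x. c x \<partial>lborel)" .
    moreover have "integrable lborel c" if "0 < t"
    proof -
      have "c = (\<lambda>x. ps / t powr ps * C x)" using that ps by (auto simp: C_def)
      then show ?thesis using int_C by simp
    qed
    ultimately show ?thesis by blast
  qed
qed

lemma Lp_pow_le_weighted:
  fixes \<Omega> :: "'a::euclidean_space set" and v :: "'a \<Rightarrow> real"
  assumes \<Omega>: "\<Omega> \<subseteq> cball 0 R" "\<Omega> \<in> sets lborel" and v0: "\<And>x. x \<notin> \<Omega> \<Longrightarrow> v x = 0"
    and int_v: "integrable lborel (\<lambda>x. \<bar>v x\<bar> powr p)"
    and int_c: "integrable lborel (\<lambda>x. indicator \<Omega> x * (\<bar>v x\<bar> powr ps * norm x powr (- \<sigma>)))"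
    and p: "0 \<le> p" "p < ps" and \<sigma>: "0 < \<sigma>" and \<epsilon>: "0 < \<epsilon>"
  shows "Lp_pow p v \<le> \<epsilon> powr p * measure lborel \<Omega>
    + \<epsilon> powr (p - ps) * R powr \<sigma> * (\<integral>x. indicator \<Omega> x * (\<bar>v x\<bar> powr ps * norm x powr (- \<sigma>)) \<partial>lborel)"
proof -
  let ?c = "\<lambda>x. indicator \<Omega> x * (\<bar>v x\<bar> powr ps * norm x powr (- \<sigma>))"
  have "emeasure lborel \<Omega> \<le> emeasure lborel (cball (0::'a) R)" by (rule emeasure_mono[OF \<Omega>(1)]) simp
  also have "\<dots> < \<infinity>" by (rule emeasure_compact_finite) simp
  finally have int_\<Omega>: "integrable lborel (indicat_real \<Omega>)" by (rule integrable_real_indicator[OF \<Omega>(2)])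
  have "Lp_pow p v \<le> (\<integral>x. \<epsilon> powr p * indicator \<Omega> x + \<epsilon> powr (p - ps) * R powr \<sigma> * ?c x \<partial>lborel)"
    unfolding Lp_pow_def
  proof (rule integral_mono_AE[OF int_v])
    show "integrable lborel (\<lambda>x. \<epsilon> powr p * indicator \<Omega> x + \<epsilon> powr (p - ps) * R powr \<sigma> * ?c x)"
      using int_\<Omega> int_c by simp
    show "AE x in lborel. \<bar>v x\<bar> powr p \<le> \<epsilon> powr p * indicator \<Omega> x + \<epsilon> powr (p - ps) * R powr \<sigma> * ?c x"
      using AE_lborel_singleton[of 0]
    proof eventually_elim
      case (elim x)
      show ?case
      proof (cases "x \<in> \<Omega>")
        case True
        then have "norm x \<le> R" using \<Omega>(1) by auto
        with True elim show ?thesis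
          using powr_le_split_weighted[OF \<epsilon> p \<sigma>, of "norm x" R "\<bar>v x\<bar>"] by simp
      qed (simp add: v0)
    qed
  qed
  also have "\<dots> = \<epsilon> powr p * measure lborel \<Omega> + \<epsilon> powr (p - ps) * R powr \<sigma> * (\<integral>x. ?c x \<partial>lborel)"
    using int_\<Omega> int_c by simp
  finally show ?thesis .
qed

lemma E0_ray_bound:
  fixes \<Omega> :: "'a::euclidean_space set" and v :: "'a \<Rightarrow> real"
  assumes \<Omega>: "\<Omega> \<subseteq> cball 0 R" "\<Omega> \<in> sets lborel" and R: "0 < R"
    and p: "1 < p" "p < real DIM('a)" and \<sigma>: "0 < \<sigma>" "\<sigma> < p"
    and v: "v \<in> Mfd \<Omega> p" and t: "0 \<le> t"
    and ps_def: "ps = (real DIM('a) - \<sigma>) * p / (real DIM('a) - p)"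
  defines "\<kappa> \<equiv> 1 / 2 * (2 * (measure lborel \<Omega> + 1)) powr (- ((ps - p) / p)) * R powr (- \<sigma>)"
  shows "E0 \<Omega> p \<sigma> lm (\<lambda>x. t * v x)
    \<le> max 0 (t powr p * (1 - lm * Lp_pow p v / p) - t powr ps / ps * \<kappa> * Lp_pow p v powr (ps / p))"
proof -
  let ?c = "\<lambda>x. indicator \<Omega> x * (\<bar>v x\<bar> powr ps * norm x powr (- \<sigma>))"
  have bdd: "bounded \<Omega>" using \<Omega>(1) bounded_cball bounded_subset by blast
  have ps: "p < ps" unfolding ps_def using p \<sigma> by (simp add: divide_simps)
  have L: "0 < Lp_pow p v" by (rule Lp_pow_pos_Mfd[OF v _ bdd \<Omega>(2)]) (use p in linarith)
  consider "E0 \<Omega> p \<sigma> lm (\<lambda>x. t * v x) = 0"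
    | "E0 \<Omega> p \<sigma> lm (\<lambda>x. t * v x) = t powr p * (1 - lm * Lp_pow p v / p) - t powr ps / ps * (\<integral>x. ?c x \<partial>lborel)"
      "0 < t \<longrightarrow> integrable lborel ?c"
    using E0_ray[OF bdd \<Omega>(2) _ p(2) \<sigma>(2) v t ps_def] p by fastforce
  then show ?thesis
  proof cases
    case 2
    show ?thesis
    proof (cases "t = 0")
      case False
      then have "0 < t" using t by simp
      have W: "W0_grad \<Omega> p v (gradW \<Omega> p v)" using v unfolding Mfd_def by (auto intro: W0_grad_gradW)
      have "Lp_pow p v \<le> \<epsilon> powr p * measure lborel \<Omega> + \<epsilon> powr (p - ps) * R powr \<sigma> * (\<integral>x. ?c x \<partial>lborel)"
        if "0 < \<epsilon>" for \<epsilon>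
      proof (rule Lp_pow_le_weighted[OF \<Omega> _ _ _ _ ps \<sigma>(1) that])
        show "v x = 0" if "x \<notin> \<Omega>" for x using W that unfolding W0_grad_def by blast
        show "integrable lborel (\<lambda>x. \<bar>v x\<bar> powr p)"
          by (rule W0_grad_integrable_powr[OF W _ bdd]) (use p in linarith)
        show "integrable lborel ?c" using 2(2) \<open>0 < t\<close> by blast
      qed (use p in linarith)
      then have "\<kappa> * Lp_pow p v powr (ps / p) \<le> (\<integral>x. ?c x \<partial>lborel)"
        unfolding \<kappa>_def using lower_bound_from_splitting[OF L _ R _ ps] p by simp
      then have "t powr ps / ps * (\<kappa> * Lp_pow p v powr (ps / p)) \<le> t powr ps / ps * (\<integral>x. ?c x \<partial>lborel)"
        using ps p by (intro mult_left_mono) auto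
      then show ?thesis using 2(1) by (simp add: mult.assoc)
    qed (use 2 in simp)
  qed simp
qed

lemma sublevel_mono: "a \<le> b \<Longrightarrow> sublevel \<Omega> p a \<subseteq> sublevel \<Omega> p b"
  unfolding sublevel_def by auto

lemma E0_ray_le:
  fixes \<Omega> :: "'a::euclidean_space set" and v :: "'a \<Rightarrow> real"
  assumes \<Omega>: "\<Omega> \<subseteq> cball 0 R" "\<Omega> \<in> sets lborel" and R: "0 < R"
    and p: "1 < p" "p < real DIM('a)" and \<sigma>: "0 < \<sigma>" "\<sigma> < p"
    and v: "v \<in> sublevel \<Omega> p (lm + a)" and a: "0 \<le> a" and t: "0 \<le> t"
    and ps_def: "ps = (real DIM('a) - \<sigma>) * p / (real DIM('a) - p)"
  defines "\<kappa> \<equiv> 1 / 2 * (2 * (measure lborel \<Omega> + 1)) powr (- ((ps - p) / p)) * R powr (- \<sigma>)"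
  shows "E0 \<Omega> p \<sigma> lm (\<lambda>x. t * v x) \<le> (a / p) powr (ps / (ps - p)) * (\<kappa> / ps) powr (- p / (ps - p))"
proof -
  let ?L = "Lp_pow p v"
  have vM: "v \<in> Mfd \<Omega> p" and "p / ?L \<le> lm + a" using v unfolding sublevel_def Psi_def by auto
  have bdd: "bounded \<Omega>" using \<Omega>(1) bounded_cball bounded_subset by blast
  have L: "0 < ?L" by (rule Lp_pow_pos_Mfd[OF vM _ bdd \<Omega>(2)]) (use p in linarith)
  have ps: "p < ps" unfolding ps_def using p \<sigma> by (simp add: divide_simps)
  have "0 < 2 * (measure lborel \<Omega> + 1)" by (simp add: add_nonneg_pos)
  then have \<kappa>: "0 < \<kappa>" unfolding \<kappa>_def using R by (intro mult_pos_pos) auto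
  have "p \<le> (lm + a) * ?L" using \<open>p / ?L \<le> lm + a\<close> L by (simp add: divide_le_eq)
  then have "(p - lm * ?L) / p \<le> a * ?L / p" using p by (intro divide_right_mono) (auto simp: algebra_simps)
  then have "1 - lm * ?L / p \<le> a * ?L / p" using p by (simp add: diff_divide_distrib)
  then have "t powr p * (1 - lm * ?L / p) \<le> t powr p * (a * ?L / p)" by (rule mult_left_mono) simp
  then have "t powr p * (1 - lm * ?L / p) - t powr ps / ps * \<kappa> * ?L powr (ps / p)
      \<le> t powr p * (a * ?L / p) - t powr ps / ps * \<kappa> * ?L powr (ps / p)"
    by (rule diff_right_mono)
  also have "\<dots> \<le> (a / p) powr (ps / (ps - p)) * (\<kappa> / ps) powr (- p / (ps - p))"
    by (rule ray_maximum_le[OF a \<kappa> L t _ ps]) (use p in linarith)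
  finally have "max 0 (t powr p * (1 - lm * ?L / p) - t powr ps / ps * \<kappa> * ?L powr (ps / p))
      \<le> (a / p) powr (ps / (ps - p)) * (\<kappa> / ps) powr (- p / (ps - p))"
    by simp
  then show ?thesis by (rule order_trans[OF E0_ray_bound[OF \<Omega> R p \<sigma> vM t ps_def, folded \<kappa>_def]])
qed

theorem lemma2p8:
  fixes \<Omega> :: "'a::euclidean_space set"
    and p \<sigma> lm c\<^sub>1 :: real and k :: nat
    and C\<^sub>0 :: "('a \<Rightarrow> real) set" and \<eta> :: "real \<Rightarrow> real"
  assumes "open \<Omega>" "connected \<Omega>" "bounded \<Omega>" "0 \<in> \<Omega>"
    and "1 < p" "p < real DIM('a)" "0 < \<sigma>" "\<sigma> < p"
    and "k \<ge> 1"
    and "lam \<Omega> p k < lam \<Omega> p (Suc k)"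
    and "lam \<Omega> p k \<le> ereal lm" "ereal lm < lam \<Omega> p (Suc k)"
    \<comment> \<open>the set C_0\<close>
    and "C\<^sub>0 \<subseteq> sublevel \<Omega> p (real_of_ereal (lam \<Omega> p k))"
    and "symmetric_set C\<^sub>0"
    and "\<forall>s::nat \<Rightarrow> 'a \<Rightarrow> real. (\<forall>n. s n \<in> C\<^sub>0) \<longrightarrow>
           (\<exists>l\<in>C\<^sub>0. \<exists>r. strict_mono r \<and> (\<lambda>n. distW \<Omega> p (s (r n)) l) \<longlonglongrightarrow> 0)"
    and "fr_index (distW \<Omega> p) C\<^sub>0 = enat k"
    and "\<exists>M. \<forall>u\<in>C\<^sub>0. AE x in lborel. \<bar>u x\<bar> \<le> M"
    and "\<forall>u\<in>C\<^sub>0. Ck_on \<Omega> 1 u"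
    and "\<forall>K. compact K \<and> K \<subseteq> \<Omega> \<longrightarrow>
           (\<exists>M. \<forall>u\<in>C\<^sub>0. \<forall>x\<in>K. \<bar>u x\<bar> \<le> M \<and> norm (grad u x) \<le> M)"
    \<comment> \<open>the cut-off \<eta>\<close>
    and "smooth_fun_on {0<..} \<eta>"
    and "\<forall>s\<ge>0. 0 \<le> \<eta> s \<and> \<eta> s \<le> 1"
    and "\<forall>s\<in>{0..3/4}. \<eta> s = 0" "\<forall>s\<ge>1. \<eta> s = 1"
    \<comment> \<open>the constant c_1, with \<rho>_0 = dist(0, \<partial>\<Omega>) and C_\<rho> = \<pi>_M(u_\<rho>), u \<in> C_0\<close>
    and "c\<^sub>1 > 0"
    and "\<forall>\<rho>. 0 < \<rho> \<and> \<rho> \<le> infdist 0 (frontier \<Omega>) / 2 \<longrightarrow>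
           (\<lambda>u. piM \<Omega> p (\<lambda>x. \<eta> (norm x / \<rho>) * u x)) ` C\<^sub>0
             \<subseteq> sublevel \<Omega> p (real_of_ereal (lam \<Omega> p k) + c\<^sub>1 * \<rho> powr (real DIM('a) - p))"
  shows "\<exists>c\<^sub>1\<^sub>3>0. \<forall>\<rho>. 0 < \<rho> \<and> \<rho> \<le> infdist 0 (frontier \<Omega>) / 2 \<longrightarrow>
           (\<forall>v\<in>(\<lambda>u. piM \<Omega> p (\<lambda>x. \<eta> (norm x / \<rho>) * u x)) ` C\<^sub>0. \<forall>t\<ge>0.
              (real_of_ereal (lam \<Omega> p k) + c\<^sub>1 * \<rho> powr (real DIM('a) - p) \<le> lm
                 \<longrightarrow> E0 \<Omega> p \<sigma> lm (\<lambda>x. t * v x) \<le> 0) \<and>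
              (ereal lm = lam \<Omega> p k
                 \<longrightarrow> E0 \<Omega> p \<sigma> lm (\<lambda>x. t * v x)
                       \<le> c\<^sub>1\<^sub>3 * \<rho> powr ((real DIM('a) - \<sigma>) * (real DIM('a) - p) / (p - \<sigma>))))"
proof -
  let ?N = "real DIM('a)" and ?e = "(real DIM('a) - \<sigma>) * (real DIM('a) - p) / (p - \<sigma>)"
  define ps where "ps = (?N - \<sigma>) * p / (?N - p)"
  obtain R where R: "0 < R" "\<Omega> \<subseteq> cball 0 R"
    using bounded_subset_ballD[OF assms(3), of 0] ball_subset_cball by blast
  define \<kappa> where "\<kappa> = 1 / 2 * (2 * (measure lborel \<Omega> + 1)) powr (- ((ps - p) / p)) * R powr (- \<sigma>)"
  define c\<^sub>1\<^sub>3 where "c\<^sub>1\<^sub>3 = (c\<^sub>1 / p) powr (ps / (ps - p)) * (\<kappa> / ps) powr (- p / (ps - p))"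
  have p: "0 < p" "p < ps" unfolding ps_def using assms(5-8) by (simp_all add: divide_simps)
  have "0 < 2 * (measure lborel \<Omega> + 1)" by (simp add: add_nonneg_pos)
  then have "0 < \<kappa>" unfolding \<kappa>_def using R by (intro mult_pos_pos) auto
  then have c\<^sub>1\<^sub>3: "0 < c\<^sub>1\<^sub>3" unfolding c\<^sub>1\<^sub>3_def using p assms(24) by simp
  have ratio: "ps / (ps - p) = (?N - \<sigma>) / (p - \<sigma>)"
    unfolding ps_def using assms(5,6,8) by (intro hardy_sobolev_exponent_ratio) auto
  have "\<Omega> \<in> sets lborel" using assms(1) by simp
  note E0_le = E0_ray_le[OF R(2) this R(1) assms(5-8) _ _ _ ps_def, folded \<kappa>_def]
  have scaled: "E0 \<Omega> p \<sigma> lm (\<lambda>x. t * v x) \<le> c\<^sub>1\<^sub>3 * \<rho> powr ?e"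
    if "v \<in> sublevel \<Omega> p (lm + c\<^sub>1 * \<rho> powr (?N - p))" "0 \<le> t" for v \<rho> t
    using E0_le[OF that(1) _ that(2)] assms(24)
    unfolding powr_scaled_base c\<^sub>1\<^sub>3_def ratio by (simp add: mult_ac)
  show ?thesis
  proof (intro exI[of _ c\<^sub>1\<^sub>3] conjI c\<^sub>1\<^sub>3 allI impI ballI)
    fix \<rho> t :: real and v :: "'a \<Rightarrow> real"
    assume "0 < \<rho> \<and> \<rho> \<le> infdist 0 (frontier \<Omega>) / 2"
      and "v \<in> (\<lambda>u. piM \<Omega> p (\<lambda>x. \<eta> (norm x / \<rho>) * u x)) ` C\<^sub>0" and t: "0 \<le> t"
    with assms(25) have v: "v \<in> sublevel \<Omega> p (real_of_ereal (lam \<Omega> p k) + c\<^sub>1 * \<rho> powr (?N - p))"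
      by blast
    show "E0 \<Omega> p \<sigma> lm (\<lambda>x. t * v x) \<le> 0" if "real_of_ereal (lam \<Omega> p k) + c\<^sub>1 * \<rho> powr (?N - p) \<le> lm"
    proof -
      have "v \<in> sublevel \<Omega> p (lm + 0)" using sublevel_mono[OF that] v by auto
      from E0_le[OF this order.refl t] show ?thesis by simp
    qed
    show "E0 \<Omega> p \<sigma> lm (\<lambda>x. t * v x) \<le> c\<^sub>1\<^sub>3 * \<rho> powr ?e" if "ereal lm = lam \<Omega> p k"
      using scaled[OF _ t] v unfolding that[symmetric] by simp
  qed
qed

end
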